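(* Let $\Lambda\in P^+$. Fix $p\in\mathbb{N}$, $\mathbf{b}=(b_1,\dots,b_p)\in\mathbb{N}^p$ with $\sum_ib_i=n$, and pairwise distinct $\nu^1,\dots,\nu^p\in I$; let $\widetilde\nu=(\nu^1,\dots,\nu^1,\dots,\nu^p,\dots,\nu^p)\in I^n$ ($b_i$ copies of $\nu^i$) and $\beta=\sum_ib_i\alpha_{\nu^i}$. Then for each $1\le i\le p$ there is an element $q_i\in\mathcal{P}_{\widetilde\nu_{\le c_{i-1}+1}}$ which is a polynomial in $\mathrm{x}_{c_{i-1}+1}$ of degree $N_i^\Lambda(\widetilde\nu)$ with invertible leading coefficient and other coefficients in $\mathcal{P}_{\widetilde\nu_{\le c_{i-1}}}$, such that $q_ie(\widetilde\nu)=0$ in $e(\widetilde\nu)R^\Lambda(\beta)e(\widetilde\nu)$.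
   Context: Fix a field $\mathbf{k}$ of characteristic $\neq 2$. A Cartan superdatum consists of an index set $I$; a symmetrizable generalized Cartan matrix $A=(a_{ij})_{i,j\in I}$ ($a_{ii}=2$, $a_{ij}\le 0$ for $i\ne j$, $a_{ij}=0\iff a_{ji}=0$, positive integers $d_i$ with $d_ia_{ij}=d_ja_{ji}$); a free abelian group $P$; $\mathbb{Z}$-linearly independent $\alpha_i\in P$; $h_i\in\mathrm{Hom}_{\mathbb{Z}}(P,\mathbb{Z})$ with $\langle h_i,\alpha_j\rangle=a_{ij}$; and $I=I_{\mathrm{even}}\sqcup I_{\mathrm{odd}}$ with $a_{ij}\in2\mathbb{Z}$ whenever $i\in I_{\mathrm{odd}}$. A symmetric bilinear form $(\cdot|\cdot)$ on $P$ satisfies $(\alpha_i|\lambda)=d_i\langle h_i,\lambda\rangle$. Parity $\mathrm{p}(i)=1$ if $i\in I_{\mathrm{odd}}$, $0$ otherwise. $P^+=\{\Lambda:\langle h_i,\Lambda\rangle\ge0\ \forall i\}$; $I^\beta=\{\nu\in I^n:\sum_s\alpha_{\nu_s}=\beta\}$. For $\nu\in I^m$, $\mathcal{P}_\nu=\mathbf{k}\langle\mathrm{x}_1,\dots,\mathrm{x}_m\rangle/(\mathrm{x}_a\mathrm{x}_b-(-1)^{\mathrm{p}(\nu_a)\mathrm{p}(\nu_b)}\mathrm{x}_b\mathrm{x}_a)$; for $\nu\in I^n$ and $m\le n$, $\nu_{\le m}=(\nu_1,\dots,\nu_m)$ and $\mathcal{P}_{\nu_{\le m}}\subset\mathcal{P}_\nu$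 naturally. Fix $Q_{ij}(\mathrm{x}_1,\mathrm{x}_2)=\sum_{r,s}t_{i,j;(r,s)}\mathrm{x}_1^r\mathrm{x}_2^s\in\mathcal{P}_{(i,j)}$ with: $t_{i,j;(r,s)}\ne0$ only if $-2(\alpha_i|\alpha_j)-r(\alpha_i|\alpha_i)-s(\alpha_j|\alpha_j)=0$; $t_{i,j;(r,s)}=t_{j,i;(s,r)}$; $t_{i,j;(-a_{ij},0)}\in\mathbf{k}^\times$; $t_{i,j;(r,s)}=0$ if $i=j$ or ($i\in I_{\mathrm{odd}}$ and $r$ odd). $R(\beta)$ is the $\mathbf{k}$-algebra with generators $e(\nu)$ ($\nu\in I^\beta$), $x_1,\dots,x_n$, $\tau_1,\dots,\tau_{n-1}$ and relations: $e(\mu)e(\nu)=\delta_{\mu\nu}e(\nu)$, $\sum_\nu e(\nu)=1$; $x_px_qe(\nu)=(-1)^{\mathrm{p}(\nu_p)\mathrm{p}(\nu_q)}x_qx_pe(\nu)$ ($p\ne q$); $x_pe(\nu)=e(\nu)x_p$; $\tau_ae(\nu)=e(s_a\nu)\tau_a$; $\tau_ax_pe(\nu)=(-1)^{\mathrm{p}(\nu_p)\mathrm{p}(\nu_a)\mathrm{p}(\nu_{a+1})}x_p\tau_ae(\nu)$ ($p\ne a,a+1$); $(\tau_ax_{a+1}-(-1)^{\mathrm{p}(\nu_a)\mathrm{p}(\nu_{a+1})}x_a\tau_a)e(\nu)=(x_{a+1}\tau_a-(-1)^{\mathrm{p}(\nu_a)\mathrm{p}(\nu_{a+1})}\tau_ax_a)e(\nu)=\delta_{\nu_a,\nu_{a+1}}e(\nu)$;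 $\tau_a^2e(\nu)=Q_{\nu_a,\nu_{a+1}}(x_a,x_{a+1})e(\nu)$; $\tau_a\tau_be(\nu)=(-1)^{\mathrm{p}(\nu_a)\mathrm{p}(\nu_{a+1})\mathrm{p}(\nu_b)\mathrm{p}(\nu_{b+1})}\tau_b\tau_ae(\nu)$ ($|a-b|>1$); $(\tau_{a+1}\tau_a\tau_{a+1}-\tau_a\tau_{a+1}\tau_a)e(\nu)$ equals $\frac{Q_{\nu_a,\nu_{a+1}}(x_{a+2},x_{a+1})-Q_{\nu_a,\nu_{a+1}}(x_a,x_{a+1})}{x_{a+2}-x_a}e(\nu)$ if $\nu_a=\nu_{a+2}\in I_{\mathrm{even}}$, $(-1)^{\mathrm{p}(\nu_{a+1})}(x_{a+2}-x_a)\frac{Q_{\nu_a,\nu_{a+1}}(x_{a+2},x_{a+1})-Q_{\nu_a,\nu_{a+1}}(x_a,x_{a+1})}{x_{a+2}^2-x_a^2}e(\nu)$ if $\nu_a=\nu_{a+2}\in I_{\mathrm{odd}}$, $0$ otherwise; $s_a=(a,a+1)$, and $\mathfrak{S}_n$ acts on $I^n$ by $(w\nu)_j=\nu_{w^{-1}(j)}$. For $\Lambda\in P^+$, $R^\Lambda(\beta)=R(\beta)/\langle\sum_{\nu}x_1^{\langle h_{\nu_1},\Lambda\rangle}e(\nu)\rangle$. Elements of $\mathcal{P}_\nu$ act on $R^\Lambda(\beta)e(\nu)$ from the left by substituting $x_j$ for $\mathrm{x}_j$. Notation: $c_0=0$, $c_t=b_1+\dots+b_t$; $N_i^\Lambda(\widetilde\nu)=\langle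 h_{\nu^i},\Lambda-\sum_{j=1}^{c_{i-1}}\alpha_{\widetilde\nu_j}\rangle$. *)

theory Defs
  imports Complex_Main "HOL-Library.Poly_Mapping"
begin

datatype 'i gen = E "'i list" | X nat | T nat

type_synonym ('i, 'k) fa = "'i gen list \<Rightarrow>\<^sub>0 'k"

definition fa_mult :: "('i, 'k::comm_ring_1) fa \<Rightarrow> ('i, 'k) fa \<Rightarrow> ('i, 'k) fa" (infixl "\<odot>" 70) where
  "fa_mult f g = (\<Sum>u\<in>Poly_Mapping.keys f. \<Sum>v\<in>Poly_Mapping.keys g. Poly_Mapping.single (u @ v) (Poly_Mapping.lookup f u * Poly_Mapping.lookup g v))"

definition fa_scal :: "'k::comm_ring_1 \<Rightarrow> ('i, 'k) fa" where
  "fa_scal c = Poly_Mapping.single [] c"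

definition fa_one :: "('i, 'k::comm_ring_1) fa" where
  "fa_one = fa_scal 1"

definition fa_gen :: "'i gen \<Rightarrow> ('i, 'k::comm_ring_1) fa" where
  "fa_gen g = Poly_Mapping.single [g] 1"

definition fa_pow :: "('i, 'k::comm_ring_1) fa \<Rightarrow> nat \<Rightarrow> ('i, 'k) fa" where
  "fa_pow x n = foldr fa_mult (replicate n x) fa_one"

definition fa_over :: "'i gen set \<Rightarrow> ('i, 'k::comm_ring_1) fa set" where
  "fa_over G = {f. Poly_Mapping.keys f \<subseteq> lists G}"

inductive_set fa_ideal :: "'i gen set \<Rightarrow> ('i, 'k::comm_ring_1) fa set \<Rightarrow> ('i, 'k) fa set"
  for G S where
  gen: "r \<in> S \<Longrightarrow> r \<in> fa_ideal G S"
| zero: "0 \<in> fa_ideal G S"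
| add: "u \<in> fa_ideal G S \<Longrightarrow> v \<in> fa_ideal G S \<Longrightarrow> u + v \<in> fa_ideal G S"
| mult: "u \<in> fa_ideal G S \<Longrightarrow> a \<in> fa_over G \<Longrightarrow> c \<in> fa_over G \<Longrightarrow> a \<odot> u \<odot> c \<in> fa_ideal G S"

text \<open>The weight lattice P is the free abelian group of finitely supported functions b to int.\<close>

definition zsmul :: "int \<Rightarrow> ('b \<Rightarrow>\<^sub>0 int) \<Rightarrow> ('b \<Rightarrow>\<^sub>0 int)" where
  "zsmul c x = Poly_Mapping.map (\<lambda>z. c * z) x"

definition cartan_superdatum ::
  "('i \<Rightarrow> 'i \<Rightarrow> int) \<Rightarrow> ('i \<Rightarrow> nat) \<Rightarrow> ('i \<Rightarrow> ('b \<Rightarrow>\<^sub>0 int)) \<Rightarrow> ('i \<Rightarrow> ('b \<Rightarrow>\<^sub>0 int) \<Rightarrow> int) \<Rightarrow> 'i set \<Rightarrow> bool" where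
  "cartan_superdatum A d alpha h Iodd \<longleftrightarrow>
     (\<forall>i. A i i = 2) \<and>
     (\<forall>i j. i \<noteq> j \<longrightarrow> A i j \<le> 0) \<and>
     (\<forall>i j. A i j = 0 \<longleftrightarrow> A j i = 0) \<and>
     (\<forall>i. d i > 0) \<and>
     (\<forall>i j. int (d i) * A i j = int (d j) * A j i) \<and>
     (\<forall>F c. finite F \<longrightarrow> (\<Sum>i\<in>F. zsmul (c i) (alpha i)) = 0 \<longrightarrow> (\<forall>i\<in>F. c i = 0)) \<and>
     (\<forall>i x y. h i (x + y) = h i x + h i y) \<and>
     (\<forall>i j. h i (alpha j) = A i j) \<and>
     (\<forall>i j. i \<in> Iodd \<longrightarrow> even (A i j))"

definition compatible_form ::
  "(('b \<Rightarrow>\<^sub>0 int) \<Rightarrow> ('b \<Rightarrow>\<^sub>0 int) \<Rightarrow> rat) \<Rightarrow> ('i \<Rightarrow> ('b \<Rightarrow>\<^sub>0 int)) \<Rightarrow> ('i \<Rightarrow> ('b \<Rightarrow>\<^sub>0 int) \<Rightarrow> int) \<Rightarrow> ('i \<Rightarrow> nat) \<Rightarrow> bool" where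
  "compatible_form form alpha h d \<longleftrightarrow>
     (\<forall>x y. form x y = form y x) \<and>
     (\<forall>x y z. form (x + y) z = form x z + form y z) \<and>
     (\<forall>i l. form (alpha i) l = of_nat (d i) * of_int (h i l))"

definition par :: "'i set \<Rightarrow> 'i \<Rightarrow> nat" where
  "par Iodd i = (if i \<in> Iodd then 1 else 0)"

text \<open>Conditions on the coefficients t(i,j,r,s) of Q(i,j).\<close>
definition Q_param ::
  "(('b \<Rightarrow>\<^sub>0 int) \<Rightarrow> ('b \<Rightarrow>\<^sub>0 int) \<Rightarrow> rat) \<Rightarrow> ('i \<Rightarrow> ('b \<Rightarrow>\<^sub>0 int)) \<Rightarrow> ('i \<Rightarrow> 'i \<Rightarrow> int) \<Rightarrow> 'i set
    \<Rightarrow> ('i \<Rightarrow> 'i \<Rightarrow> nat \<Rightarrow> nat \<Rightarrow> 'k::field) \<Rightarrow> bool" where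
  "Q_param form alpha A Iodd t \<longleftrightarrow>
     (\<forall>i j r s. t i j r s \<noteq> 0 \<longrightarrow>
        - 2 * form (alpha i) (alpha j) - of_nat r * form (alpha i) (alpha i) - of_nat s * form (alpha j) (alpha j) = 0) \<and>
     (\<forall>i j r s. t i j r s = t j i s r) \<and>
     (\<forall>i j. i \<noteq> j \<longrightarrow> t i j (nat (- A i j)) 0 \<noteq> 0) \<and>
     (\<forall>i r s. t i i r s = 0) \<and>
     (\<forall>i j r s. i \<in> Iodd \<and> odd r \<longrightarrow> t i j r s = 0)"

abbreviation fa_e :: "'i list \<Rightarrow> ('i, 'k::comm_ring_1) fa" where "fa_e \<nu> \<equiv> fa_gen (E \<nu>)"
abbreviation fa_x :: "nat \<Rightarrow> ('i, 'k::comm_ring_1) fa" where "fa_x p \<equiv> fa_gen (X p)"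
abbreviation fa_t :: "nat \<Rightarrow> ('i, 'k::comm_ring_1) fa" where "fa_t a \<equiv> fa_gen (T a)"

text \<open>1-based entries of a sequence, and the action of s_a = (a,a+1).\<close>
definition nth1 :: "'i list \<Rightarrow> nat \<Rightarrow> 'i" where
  "nth1 \<nu> p = \<nu> ! (p - 1)"

definition swap1 :: "nat \<Rightarrow> 'i list \<Rightarrow> 'i list" where
  "swap1 a \<nu> = \<nu>[a - 1 := \<nu> ! a, a := \<nu> ! (a - 1)]"

definition sgn_k :: "nat \<Rightarrow> 'k::comm_ring_1" where
  "sgn_k m = (- 1) ^ m"

definition Q_eval :: "('i \<Rightarrow> 'i \<Rightarrow> nat \<Rightarrow> nat \<Rightarrow> 'k::field) \<Rightarrow> 'i \<Rightarrow> 'i \<Rightarrow> ('i, 'k) fa \<Rightarrow> ('i, 'k) fa \<Rightarrow> ('i, 'k) fa" where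
  "Q_eval t i j u w = (\<Sum>(r, s)\<in>{(r, s). t i j r s \<noteq> 0}. fa_scal (t i j r s) \<odot> fa_pow u r \<odot> fa_pow w s)"

text \<open>(Q(i,j)(u,v) - Q(i,j)(w,v)) / (u - w), written out (u, w commuting even variables).\<close>
definition DD_even :: "('i \<Rightarrow> 'i \<Rightarrow> nat \<Rightarrow> nat \<Rightarrow> 'k::field) \<Rightarrow> 'i \<Rightarrow> 'i \<Rightarrow> ('i, 'k) fa \<Rightarrow> ('i, 'k) fa \<Rightarrow> ('i, 'k) fa \<Rightarrow> ('i, 'k) fa" where
  "DD_even t i j u v w = (\<Sum>(r, s)\<in>{(r, s). t i j r s \<noteq> 0}.
      fa_scal (t i j r s) \<odot> (\<Sum>k<r. fa_pow u k \<odot> fa_pow w (r - 1 - k)) \<odot> fa_pow v s)"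

text \<open>(Q(i,j)(u,v) - Q(i,j)(w,v)) / (u^2 - w^2), written out (only even r occur, u^2, w^2 central).\<close>
definition DD_odd :: "('i \<Rightarrow> 'i \<Rightarrow> nat \<Rightarrow> nat \<Rightarrow> 'k::field) \<Rightarrow> 'i \<Rightarrow> 'i \<Rightarrow> ('i, 'k) fa \<Rightarrow> ('i, 'k) fa \<Rightarrow> ('i, 'k) fa \<Rightarrow> ('i, 'k) fa" where
  "DD_odd t i j u v w = (\<Sum>(r, s)\<in>{(r, s). t i j r s \<noteq> 0}.
      fa_scal (t i j r s) \<odot> (\<Sum>k<r div 2. fa_pow (u \<odot> u) k \<odot> fa_pow (w \<odot> w) (r div 2 - 1 - k)) \<odot> fa_pow v s)"

text \<open>Generators of R(beta) for n = |beta| and index set Ib = I^beta.\<close>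
definition klr_gens :: "nat \<Rightarrow> 'i list set \<Rightarrow> 'i gen set" where
  "klr_gens n Ib = {E \<nu> | \<nu>. \<nu> \<in> Ib} \<union> {X p | p. 1 \<le> p \<and> p \<le> n} \<union> {T a | a. 1 \<le> a \<and> a < n}"

definition klr_rels :: "'i set \<Rightarrow> ('i \<Rightarrow> 'i \<Rightarrow> nat \<Rightarrow> nat \<Rightarrow> 'k::field) \<Rightarrow> nat \<Rightarrow> 'i list set \<Rightarrow> ('i, 'k) fa set" where
  "klr_rels Iodd t n Ib =
     {fa_e \<mu> \<odot> fa_e \<nu> - (if \<mu> = \<nu> then fa_e \<nu> else 0) | \<mu> \<nu>. \<mu> \<in> Ib \<and> \<nu> \<in> Ib}
   \<union> {(\<Sum>\<nu>\<in>Ib. fa_e \<nu>) - fa_one}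
   \<union> {fa_x p \<odot> fa_x q \<odot> fa_e \<nu>
        - fa_scal (sgn_k (par Iodd (nth1 \<nu> p) * par Iodd (nth1 \<nu> q))) \<odot> fa_x q \<odot> fa_x p \<odot> fa_e \<nu>
       | p q \<nu>. \<nu> \<in> Ib \<and> 1 \<le> p \<and> p \<le> n \<and> 1 \<le> q \<and> q \<le> n \<and> p \<noteq> q}
   \<union> {fa_x p \<odot> fa_e \<nu> - fa_e \<nu> \<odot> fa_x p | p \<nu>. \<nu> \<in> Ib \<and> 1 \<le> p \<and> p \<le> n}
   \<union> {fa_t a \<odot> fa_e \<nu> - fa_e (swap1 a \<nu>) \<odot> fa_t a | a \<nu>. \<nu> \<in> Ib \<and> 1 \<le> a \<and> a < n}
   \<union> {fa_t a \<odot> fa_x p \<odot> fa_e \<nu>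
        - fa_scal (sgn_k (par Iodd (nth1 \<nu> p) * par Iodd (nth1 \<nu> a) * par Iodd (nth1 \<nu> (a + 1))))
            \<odot> fa_x p \<odot> fa_t a \<odot> fa_e \<nu>
       | a p \<nu>. \<nu> \<in> Ib \<and> 1 \<le> a \<and> a < n \<and> 1 \<le> p \<and> p \<le> n \<and> p \<noteq> a \<and> p \<noteq> a + 1}
   \<union> {(fa_t a \<odot> fa_x (a + 1)
         - fa_scal (sgn_k (par Iodd (nth1 \<nu> a) * par Iodd (nth1 \<nu> (a + 1)))) \<odot> fa_x a \<odot> fa_t a) \<odot> fa_e \<nu>
        - (if nth1 \<nu> a = nth1 \<nu> (a + 1) then fa_e \<nu> else 0)
       | a \<nu>. \<nu> \<in> Ib \<and> 1 \<le> a \<and> a < n}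
   \<union> {(fa_x (a + 1) \<odot> fa_t a
         - fa_scal (sgn_k (par Iodd (nth1 \<nu> a) * par Iodd (nth1 \<nu> (a + 1)))) \<odot> fa_t a \<odot> fa_x a) \<odot> fa_e \<nu>
        - (if nth1 \<nu> a = nth1 \<nu> (a + 1) then fa_e \<nu> else 0)
       | a \<nu>. \<nu> \<in> Ib \<and> 1 \<le> a \<and> a < n}
   \<union> {fa_t a \<odot> fa_t a \<odot> fa_e \<nu> - Q_eval t (nth1 \<nu> a) (nth1 \<nu> (a + 1)) (fa_x a) (fa_x (a + 1)) \<odot> fa_e \<nu>
       | a \<nu>. \<nu> \<in> Ib \<and> 1 \<le> a \<and> a < n}
   \<union> {fa_t a \<odot> fa_t b \<odot> fa_e \<nu>
        - fa_scal (sgn_k (par Iodd (nth1 \<nu> a) * par Iodd (nth1 \<nu> (a + 1)) * par Iodd (nth1 \<nu> b) * par Iodd (nth1 \<nu> (b + 1))))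
            \<odot> fa_t b \<odot> fa_t a \<odot> fa_e \<nu>
       | a b \<nu>. \<nu> \<in> Ib \<and> 1 \<le> a \<and> a < n \<and> 1 \<le> b \<and> b < n \<and> (a + 1 < b \<or> b + 1 < a)}
   \<union> {(fa_t (a + 1) \<odot> fa_t a \<odot> fa_t (a + 1) - fa_t a \<odot> fa_t (a + 1) \<odot> fa_t a) \<odot> fa_e \<nu>
        - (if nth1 \<nu> a = nth1 \<nu> (a + 2) \<and> nth1 \<nu> a \<notin> Iodd then
             DD_even t (nth1 \<nu> a) (nth1 \<nu> (a + 1)) (fa_x (a + 2)) (fa_x (a + 1)) (fa_x a) \<odot> fa_e \<nu>
           else if nth1 \<nu> a = nth1 \<nu> (a + 2) \<and> nth1 \<nu> a \<in> Iodd then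
             fa_scal (sgn_k (par Iodd (nth1 \<nu> (a + 1)))) \<odot> (fa_x (a + 2) - fa_x a)
               \<odot> DD_odd t (nth1 \<nu> a) (nth1 \<nu> (a + 1)) (fa_x (a + 2)) (fa_x (a + 1)) (fa_x a) \<odot> fa_e \<nu>
           else 0)
       | a \<nu>. \<nu> \<in> Ib \<and> 1 \<le> a \<and> a + 2 \<le> n}"

text \<open>The cyclotomic relation; lam i stands for the pairing of h_i with Lambda.\<close>
definition cyclo_rel :: "('i \<Rightarrow> int) \<Rightarrow> 'i list set \<Rightarrow> ('i, 'k::comm_ring_1) fa" where
  "cyclo_rel lam Ib = (\<Sum>\<nu>\<in>Ib. fa_pow (fa_x 1) (nat (lam (nth1 \<nu> 1))) \<odot> fa_e \<nu>)"

definition Ibeta :: "('i \<Rightarrow> ('b \<Rightarrow>\<^sub>0 int)) \<Rightarrow> nat \<Rightarrow> ('b \<Rightarrow>\<^sub>0 int) \<Rightarrow> 'i list set" where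
  "Ibeta alpha n \<beta> = {\<nu>. length \<nu> = n \<and> (\<Sum>s<n. alpha (\<nu> ! s)) = \<beta>}"

text \<open>The two-sided ideal defining R^Lambda(beta) as a quotient of the free algebra.\<close>
definition cyc_ideal :: "'i set \<Rightarrow> ('i \<Rightarrow> 'i \<Rightarrow> nat \<Rightarrow> nat \<Rightarrow> 'k::field) \<Rightarrow> ('i \<Rightarrow> int) \<Rightarrow> nat \<Rightarrow> 'i list set \<Rightarrow> ('i, 'k) fa set" where
  "cyc_ideal Iodd t lam n Ib = fa_ideal (klr_gens n Ib) (klr_rels Iodd t n Ib \<union> {cyclo_rel lam Ib})"

definition Xgens :: "nat \<Rightarrow> 'i gen set" where
  "Xgens m = {X j | j. 1 \<le> j \<and> j \<le> m}"

definition pol_rels :: "'i set \<Rightarrow> 'i list \<Rightarrow> ('i, 'k::comm_ring_1) fa set" where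
  "pol_rels Iodd \<mu> = {fa_x a \<odot> fa_x b - fa_scal (sgn_k (par Iodd (nth1 \<mu> a) * par Iodd (nth1 \<mu> b))) \<odot> fa_x b \<odot> fa_x a
      | a b. 1 \<le> a \<and> a \<le> length \<mu> \<and> 1 \<le> b \<and> b \<le> length \<mu> \<and> a \<noteq> b}"

text \<open>c represents an invertible element of P_mu.\<close>
definition pol_unit :: "'i set \<Rightarrow> 'i list \<Rightarrow> ('i, 'k::comm_ring_1) fa \<Rightarrow> bool" where
  "pol_unit Iodd \<mu> c \<longleftrightarrow> c \<in> fa_over (Xgens (length \<mu>)) \<and>
     (\<exists>u\<in>fa_over (Xgens (length \<mu>)).
        u \<odot> c - fa_one \<in> fa_ideal (Xgens (length \<mu>)) (pol_rels Iodd \<mu>) \<and>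
        c \<odot> u - fa_one \<in> fa_ideal (Xgens (length \<mu>)) (pol_rels Iodd \<mu>))"

end

theory Submission
  imports Defs "HOL-Library.Multiset"
begin

text \<open>Let k = c(i - 1) + 1 be the position of the first \<nu>^i in the block sequence, so that all
  earlier entries differ from \<nu>^i. For every such sequence \<nu> in I^\<beta> we show by induction on k
  that e(\<nu>) is killed by a polynomial in x_k of degree \<langle>h_\<nu>_k, \<Lambda> - \<Sum>_{j<k} \<alpha>_\<nu>_j\<rangle> whose
  leading coefficient is a nonzero scalar and whose other coefficients only involve
  x_1, ..., x_{k-1}. For k = 1 this is the cyclotomic relation. For the step write \<nu> = s_a \<nu>'
  with \<nu>_a \<noteq> \<nu>_{a+1}, take f(x_a) e(\<nu>') = 0 from the induction hypothesis and conjugate by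
  \<tau>_a: it skew-commutes with x_1, ..., x_{a-1}, it turns x_a into \<plusminus>x_{a+1}, and
  \<tau>_a^2 e(\<nu>) = Q(x_a, x_{a+1}) e(\<nu>). In its second variable Q_{\<nu>_a,\<nu>_{a+1}} has degree
  -a_{\<nu>_{a+1},\<nu>_a} with a nonzero constant top coefficient, so \<tau>_a f(x_a) e(\<nu>') \<tau>_a is again
  such a polynomial, now in x_{a+1}. Its degree grew by -a_{\<nu>_{a+1},\<nu>_a} = -\<langle>h_\<nu>_{a+1}, \<alpha>_\<nu>_a\<rangle>,
  which is precisely the new term in the pairing.\<close>

section \<open>The free algebra as a ring\<close>

text \<open>Concatenation makes words a monoid; the convolution product that \<open>Poly_Mapping\<close> then
  provides on \<open>('i, 'k) fa\<close> is the product of the free algebra.\<close>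

instantiation list :: (type) monoid_add
begin
definition zero_list_def: "(0::'a list) = []"
definition plus_list_def: "(xs::'a list) + ys = xs @ ys"
instance by standard (auto simp: zero_list_def plus_list_def)
end

definition fa_word :: "'i gen list \<Rightarrow> ('i, 'k::comm_ring_1) fa" where
  "fa_word w = Poly_Mapping.single w 1"

lemma sum_single_lookup: "(\<Sum>u\<in>Poly_Mapping.keys f. Poly_Mapping.single u (Poly_Mapping.lookup f u)) = f"
  by (rule poly_mapping_eqI) (auto simp: lookup_sum lookup_single when_def in_keys_iff)

lemma fa_mult_eq_times [simp]: "f \<odot> g = f * g"
proof -
  have "f * g = (\<Sum>u\<in>Poly_Mapping.keys f. Poly_Mapping.single u (Poly_Mapping.lookup f u)) *
                (\<Sum>v\<in>Poly_Mapping.keys g. Poly_Mapping.single v (Poly_Mapping.lookup g v))"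
    by (simp add: sum_single_lookup)
  then show ?thesis
    by (simp add: fa_mult_def sum_distrib_left sum_distrib_right mult_single plus_list_def
        sum.swap[of _ "Poly_Mapping.keys g"])
qed

lemma fa_one_eq_one [simp]: "fa_one = 1"
  by (simp add: fa_one_def fa_scal_def zero_list_def[symmetric])

lemma fa_pow_eq_power [simp]: "fa_pow x k = x ^ k"
  by (induct k) (simp_all add: fa_pow_def)

lemma fa_scal_1 [simp]: "fa_scal 1 = 1"
  by (simp add: fa_one_eq_one[unfolded fa_one_def])

lemma fa_scal_uminus: "fa_scal (- c) = - fa_scal c"
  by (simp add: fa_scal_def single_uminus)

lemma fa_scal_mult: "fa_scal a * fa_scal b = fa_scal (a * b)"
  by (simp add: fa_scal_def mult_single plus_list_def)

lemma fa_scal_mult_left [simp]: "fa_scal a * (fa_scal b * f) = fa_scal (a * b) * f"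
  by (simp add: fa_scal_mult mult.assoc[symmetric])

lemma fa_scal_times_word: "fa_scal c * fa_word w = Poly_Mapping.single w c"
  by (simp add: fa_scal_def fa_word_def mult_single plus_list_def)

lemma fa_word_Nil [simp]: "fa_word [] = 1"
  by (simp add: fa_word_def zero_list_def[symmetric])

lemma fa_word_Cons: "fa_word (l # w) = fa_gen l * fa_word w"
  by (simp add: fa_word_def fa_gen_def mult_single plus_list_def)

lemma fa_monomial_expansion:
  "f = (\<Sum>u\<in>Poly_Mapping.keys f. fa_scal (Poly_Mapping.lookup f u) * fa_word u)"
  by (simp add: fa_scal_times_word sum_single_lookup)

lemma fa_scal_commute: "fa_scal c * f = f * fa_scal c"
proof -
  have "fa_scal c * f = (\<Sum>u\<in>Poly_Mapping.keys f. fa_scal c * Poly_Mapping.single u (Poly_Mapping.lookup f u))"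
    by (subst sum_single_lookup[symmetric, of f]) (simp add: sum_distrib_left)
  also have "\<dots> = (\<Sum>u\<in>Poly_Mapping.keys f. Poly_Mapping.single u (Poly_Mapping.lookup f u) * fa_scal c)"
    by (simp add: fa_scal_def mult_single plus_list_def mult.commute)
  also have "\<dots> = f * fa_scal c"
    by (simp add: sum_distrib_right[symmetric] sum_single_lookup)
  finally show ?thesis .
qed

lemma fa_scal_left_commute: "f * (fa_scal c * g) = fa_scal c * (f * g)"
  by (metis fa_scal_commute mult.assoc)

lemma fa_over_zero [simp]: "0 \<in> fa_over G"
  by (simp add: fa_over_def)

lemma fa_over_scal [simp]: "fa_scal c \<in> fa_over G"
  by (simp add: fa_over_def fa_scal_def)

lemma fa_over_one [simp]: "1 \<in> fa_over G"
  using fa_over_scal[of 1] by simp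

lemma fa_over_gen [simp]: "g \<in> G \<Longrightarrow> fa_gen g \<in> fa_over G"
  by (simp add: fa_over_def fa_gen_def)

lemma fa_over_word [simp]: "set w \<subseteq> G \<Longrightarrow> fa_word w \<in> fa_over G"
  by (auto simp: fa_over_def fa_word_def)

lemma fa_over_add [simp]: "f \<in> fa_over G \<Longrightarrow> g \<in> fa_over G \<Longrightarrow> f + g \<in> fa_over G"
  using keys_add[of f g] by (auto simp: fa_over_def)

lemma fa_over_uminus [simp]: "f \<in> fa_over G \<Longrightarrow> - f \<in> fa_over G"
  by (simp add: fa_over_def)

lemma fa_over_mult [simp]: "f \<in> fa_over G \<Longrightarrow> g \<in> fa_over G \<Longrightarrow> f * g \<in> fa_over G"
  using keys_mult[of f g] by (fastforce simp: fa_over_def plus_list_def)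

lemma fa_over_sum: "(\<And>x. x \<in> A \<Longrightarrow> f x \<in> fa_over G) \<Longrightarrow> sum f A \<in> fa_over G"
  by (induct A rule: infinite_finite_induct) auto

lemma fa_over_power [simp]: "f \<in> fa_over G \<Longrightarrow> f ^ k \<in> fa_over G"
  by (induct k) auto

lemma fa_over_mono: "f \<in> fa_over G \<Longrightarrow> G \<subseteq> H \<Longrightarrow> f \<in> fa_over H"
  by (auto simp: fa_over_def dest: lists_mono[THEN subsetD])

lemma fa_over_keys: "f \<in> fa_over G \<Longrightarrow> u \<in> Poly_Mapping.keys f \<Longrightarrow> set u \<subseteq> G"
  by (auto simp: fa_over_def)

lemma sum_collect_powers:
  fixes F :: "'a \<Rightarrow> 'b::semiring_1"
  assumes "finite K" "\<And>k. k \<in> K \<Longrightarrow> deg k \<le> D"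
  shows "(\<Sum>k\<in>K. F k * Y ^ deg k) = (\<Sum>m\<le>D. (\<Sum>k | k \<in> K \<and> deg k = m. F k) * Y ^ m)"
proof -
  have "(\<Sum>k\<in>K. F k * Y ^ deg k) = (\<Sum>m\<le>D. \<Sum>k | k \<in> K \<and> deg k = m. F k * Y ^ deg k)"
    using assms by (intro sum.group[symmetric]) auto
  then show ?thesis
    by (simp add: sum_distrib_right)
qed

section \<open>Congruence modulo a two-sided ideal\<close>

definition fa_cong :: "'i gen set \<Rightarrow> ('i, 'k::comm_ring_1) fa set \<Rightarrow> ('i, 'k) fa \<Rightarrow> ('i, 'k) fa \<Rightarrow> bool" where
  "fa_cong G S f g \<longleftrightarrow> f - g \<in> fa_ideal G S"

lemma fa_ideal_mult: "u \<in> fa_ideal G S \<Longrightarrow> a \<in> fa_over G \<Longrightarrow> c \<in> fa_over G \<Longrightarrow> a * u * c \<in> fa_ideal G S"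
  using fa_ideal.mult[of u G S a c] by simp

lemma fa_ideal_left: "u \<in> fa_ideal G S \<Longrightarrow> a \<in> fa_over G \<Longrightarrow> a * u \<in> fa_ideal G S"
  using fa_ideal_mult[of u G S a 1] by simp

lemma fa_ideal_right: "u \<in> fa_ideal G S \<Longrightarrow> c \<in> fa_over G \<Longrightarrow> u * c \<in> fa_ideal G S"
  using fa_ideal_mult[of u G S 1 c] by simp

lemma fa_ideal_uminus: "u \<in> fa_ideal G S \<Longrightarrow> - u \<in> fa_ideal G S"
proof -
  assume "u \<in> fa_ideal G S"
  then have "fa_scal (- 1) * u * 1 \<in> fa_ideal G S"
    by (rule fa_ideal_mult) simp_all
  then show ?thesis by (simp add: fa_scal_uminus)
qed

lemma fa_ideal_sum: "(\<And>x. x \<in> A \<Longrightarrow> f x \<in> fa_ideal G S) \<Longrightarrow> sum f A \<in> fa_ideal G S"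
  by (induct A rule: infinite_finite_induct) (auto intro: fa_ideal.zero fa_ideal.add)

lemma fa_cong_refl [simp]: "fa_cong G S f f"
  by (simp add: fa_cong_def fa_ideal.zero)

lemma fa_cong_sym: "fa_cong G S f g \<Longrightarrow> fa_cong G S g f"
  unfolding fa_cong_def by (drule fa_ideal_uminus) simp

lemma fa_cong_trans [trans]: "fa_cong G S f g \<Longrightarrow> fa_cong G S g h \<Longrightarrow> fa_cong G S f h"
  unfolding fa_cong_def by (drule (1) fa_ideal.add) simp

lemma fa_cong_eq_trans [trans]: "fa_cong G S f g \<Longrightarrow> g = h \<Longrightarrow> fa_cong G S f h"
  by simp

lemma eq_fa_cong_trans [trans]: "f = g \<Longrightarrow> fa_cong G S g h \<Longrightarrow> fa_cong G S f h"
  by simp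

lemma fa_cong_mult: "fa_cong G S f g \<Longrightarrow> a \<in> fa_over G \<Longrightarrow> c \<in> fa_over G \<Longrightarrow> fa_cong G S (a * f * c) (a * g * c)"
  unfolding fa_cong_def by (drule (2) fa_ideal_mult) (simp add: algebra_simps)

lemma fa_cong_left: "fa_cong G S f g \<Longrightarrow> a \<in> fa_over G \<Longrightarrow> fa_cong G S (a * f) (a * g)"
  using fa_cong_mult[of G S f g a 1] by simp

lemma fa_cong_right: "fa_cong G S f g \<Longrightarrow> c \<in> fa_over G \<Longrightarrow> fa_cong G S (f * c) (g * c)"
  using fa_cong_mult[of G S f g 1 c] by simp

lemma fa_cong_sum: "(\<And>x. x \<in> A \<Longrightarrow> fa_cong G S (f x) (g x)) \<Longrightarrow> fa_cong G S (sum f A) (sum g A)"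
  unfolding fa_cong_def by (drule fa_ideal_sum) (simp add: sum_subtractf)

lemma fa_cong_gen: "l - r \<in> S \<Longrightarrow> fa_cong G S l r"
  by (simp add: fa_cong_def fa_ideal.gen)

lemma fa_cong_ideal: "fa_cong G S f g \<Longrightarrow> g \<in> fa_ideal G S \<Longrightarrow> f \<in> fa_ideal G S"
  unfolding fa_cong_def by (drule (1) fa_ideal.add) simp


lemma pol_unit_scal:
  fixes c :: "'k::field"
  shows "c \<noteq> 0 \<Longrightarrow> pol_unit Iodd \<mu> (fa_scal c)"
  unfolding pol_unit_def
  by (auto intro!: bexI[of _ "fa_scal (inverse c)"] simp: fa_scal_mult fa_ideal.zero)

lemma fa_cong_commute_power:
  assumes comm: "fa_cong G S (x * z) (z * x)" and x: "x \<in> fa_over G" and z: "z \<in> fa_over G"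
  shows "fa_cong G S (x ^ j * z) (z * x ^ j)"
proof (induct j)
  case (Suc j)
  have "x ^ Suc j * z = x * (x ^ j * z)"
    by (simp add: mult.assoc)
  also have "fa_cong G S \<dots> (x * (z * x ^ j))"
    by (rule fa_cong_left[OF Suc x])
  also have "x * (z * x ^ j) = (x * z) * x ^ j"
    by (simp add: mult.assoc)
  also have "fa_cong G S \<dots> (z * x * x ^ j)"
    by (rule fa_cong_right[OF comm]) (simp add: x)
  finally show ?case
    by (simp add: mult.assoc power_commutes)
qed simp

lemma fa_cong_commute_word:
  assumes "set w \<subseteq> G" "z \<in> fa_over G" "\<forall>l\<in>set w. fa_cong G S (fa_gen l * z) (z * fa_gen l)"
  shows "fa_cong G S (fa_word w * z) (z * fa_word w)"
  using assms
proof (induct w)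
  case (Cons l w)
  have l: "l \<in> G" and w: "set w \<subseteq> G"
    using Cons.prems(1) by auto
  have comm_l: "fa_cong G S (fa_gen l * z) (z * fa_gen l)"
    using Cons.prems(3) by simp
  have comm_w: "fa_cong G S (fa_word w * z) (z * fa_word w)"
    using Cons.prems w by (intro Cons.hyps) auto
  have "fa_word (l # w) * z = fa_gen l * (fa_word w * z)"
    by (simp add: fa_word_Cons mult.assoc)
  also have "fa_cong G S \<dots> (fa_gen l * (z * fa_word w))"
    by (rule fa_cong_left[OF comm_w]) (simp add: l)
  also have "fa_gen l * (z * fa_word w) = (fa_gen l * z) * fa_word w"
    by (simp add: mult.assoc)
  also have "fa_cong G S \<dots> (z * fa_gen l * fa_word w)"
    by (rule fa_cong_right[OF comm_l]) (simp add: w)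
  finally show ?case
    by (simp add: fa_word_Cons mult.assoc)
qed simp

definition fa_twist :: "('i gen \<Rightarrow> 'k) \<Rightarrow> ('i, 'k::comm_ring_1) fa \<Rightarrow> ('i, 'k) fa" where
  "fa_twist \<sigma> c =
     (\<Sum>u\<in>Poly_Mapping.keys c. fa_scal (Poly_Mapping.lookup c u * prod_list (map \<sigma> u)) * fa_word u)"

lemma fa_twist_scal [simp]: "fa_twist \<sigma> (fa_scal c) = fa_scal c"
  by (simp add: fa_twist_def fa_scal_def)

lemma fa_twist_over: "c \<in> fa_over G \<Longrightarrow> fa_twist \<sigma> c \<in> fa_over G"
  unfolding fa_twist_def by (intro fa_over_sum fa_over_mult fa_over_scal fa_over_word) (auto dest: fa_over_keys)

lemma fa_cong_pass_word:
  assumes "set w \<subseteq> G" "y \<in> fa_over G" "z \<in> fa_over G"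
    and "\<forall>l\<in>set w. fa_cong G S (fa_gen l * z) (z * fa_gen l)"
    and "\<forall>l\<in>set w. fa_cong G S (y * fa_gen l * z) (fa_scal (\<sigma> l) * fa_gen l * y * z)"
  shows "fa_cong G S (y * fa_word w * z) (fa_scal (prod_list (map \<sigma> w)) * fa_word w * y * z)"
  using assms
proof (induct w)
  case (Cons l w)
  have l: "l \<in> G" and w: "set w \<subseteq> G" and y: "y \<in> fa_over G" and z: "z \<in> fa_over G"
    using Cons.prems(1-3) by auto
  have comm_w: "fa_cong G S (fa_word w * z) (z * fa_word w)"
    using Cons.prems(4) w z by (intro fa_cong_commute_word) auto
  have pass_l: "fa_cong G S (y * fa_gen l * z) (fa_scal (\<sigma> l) * fa_gen l * y * z)"
    using Cons.prems(5) by simp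
  have pass_w: "fa_cong G S (y * fa_word w * z) (fa_scal (prod_list (map \<sigma> w)) * fa_word w * y * z)"
    using Cons.prems by (intro Cons.hyps) auto
  have "y * fa_word (l # w) * z = (y * fa_gen l) * (fa_word w * z)"
    by (simp add: fa_word_Cons mult.assoc)
  also have "fa_cong G S \<dots> ((y * fa_gen l) * (z * fa_word w))"
    by (rule fa_cong_left[OF comm_w]) (simp add: y l)
  also have "(y * fa_gen l) * (z * fa_word w) = (y * fa_gen l * z) * fa_word w"
    by (simp add: mult.assoc)
  also have "fa_cong G S \<dots> ((fa_scal (\<sigma> l) * fa_gen l * y * z) * fa_word w)"
    by (rule fa_cong_right[OF pass_l]) (simp add: w)
  also have "\<dots> = (fa_scal (\<sigma> l) * fa_gen l * y) * (z * fa_word w)"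
    by (simp add: mult.assoc)
  also have "fa_cong G S \<dots> ((fa_scal (\<sigma> l) * fa_gen l * y) * (fa_word w * z))"
    by (rule fa_cong_left[OF fa_cong_sym[OF comm_w]]) (simp add: y l)
  also have "\<dots> = (fa_scal (\<sigma> l) * fa_gen l) * (y * fa_word w * z)"
    by (simp add: mult.assoc)
  also have "fa_cong G S \<dots> ((fa_scal (\<sigma> l) * fa_gen l) * (fa_scal (prod_list (map \<sigma> w)) * fa_word w * y * z))"
    by (rule fa_cong_left[OF pass_w]) (simp add: l)
  finally show ?case
    by (simp add: fa_word_Cons mult.assoc fa_scal_left_commute[of "fa_gen l"])
qed simp

lemma fa_cong_pass_poly:
  assumes "c \<in> fa_over H" "H \<subseteq> G" "y \<in> fa_over G" "z \<in> fa_over G"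
    and "\<forall>l\<in>H. fa_cong G S (fa_gen l * z) (z * fa_gen l)"
    and "\<forall>l\<in>H. fa_cong G S (y * fa_gen l * z) (fa_scal (\<sigma> l) * fa_gen l * y * z)"
  shows "fa_cong G S (y * c * z) (fa_twist \<sigma> c * y * z)"
proof -
  have "fa_cong G S (fa_scal (Poly_Mapping.lookup c u) * (y * fa_word u * z))
      (fa_scal (Poly_Mapping.lookup c u) * (fa_scal (prod_list (map \<sigma> u)) * fa_word u * y * z))"
    if "u \<in> Poly_Mapping.keys c" for u
    using fa_over_keys[OF assms(1) that] assms by (intro fa_cong_left fa_cong_pass_word) auto
  then have "fa_cong G S (\<Sum>u\<in>Poly_Mapping.keys c. fa_scal (Poly_Mapping.lookup c u) * (y * fa_word u * z))
      (\<Sum>u\<in>Poly_Mapping.keys c. fa_scal (Poly_Mapping.lookup c u) * (fa_scal (prod_list (map \<sigma> u)) * fa_word u * y * z))"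
    by (rule fa_cong_sum)
  moreover have "y * c * z = y * (\<Sum>u\<in>Poly_Mapping.keys c. fa_scal (Poly_Mapping.lookup c u) * fa_word u) * z"
    by (simp only: fa_monomial_expansion[symmetric])
  ultimately show ?thesis
    by (simp add: fa_twist_def sum_distrib_left sum_distrib_right mult.assoc fa_scal_left_commute[of y])
qed

lemma fa_cong_pass_power:
  assumes x: "x \<in> fa_over G" and x': "x' \<in> fa_over G" and y: "y \<in> fa_over G" and z: "z \<in> fa_over G"
    and pass: "fa_cong G S (x * y * z) (fa_scal s * y * x' * z)"
    and comm: "fa_cong G S (x' * z) (z * x')"
  shows "fa_cong G S (x ^ j * y * z) (fa_scal (s ^ j) * y * x' ^ j * z)"
proof (induct j)
  case (Suc j)
  have comm_j: "fa_cong G S (x' ^ j * z) (z * x' ^ j)"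
    using comm x' z by (rule fa_cong_commute_power)
  have "x ^ Suc j * y * z = x * (x ^ j * y * z)"
    by (simp add: mult.assoc)
  also have "fa_cong G S \<dots> (x * (fa_scal (s ^ j) * y * x' ^ j * z))"
    by (rule fa_cong_left[OF Suc x])
  also have "\<dots> = fa_scal (s ^ j) * x * y * (x' ^ j * z)"
    by (simp add: mult.assoc fa_scal_left_commute[of x])
  also have "fa_cong G S \<dots> (fa_scal (s ^ j) * x * y * (z * x' ^ j))"
    by (rule fa_cong_left[OF comm_j]) (simp add: x y)
  also have "\<dots> = fa_scal (s ^ j) * (x * y * z) * x' ^ j"
    by (simp add: mult.assoc)
  also have "fa_cong G S \<dots> (fa_scal (s ^ j) * (fa_scal s * y * x' * z) * x' ^ j)"
    by (rule fa_cong_mult[OF pass]) (simp_all add: x')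
  also have "\<dots> = fa_scal (s ^ j * s) * y * x' * (z * x' ^ j)"
    by (simp add: mult.assoc)
  also have "fa_cong G S \<dots> (fa_scal (s ^ j * s) * y * x' * (x' ^ j * z))"
    by (rule fa_cong_left[OF fa_cong_sym[OF comm_j]]) (simp add: x' y)
  finally show ?case
    by (simp add: mult.assoc mult.commute)
qed simp


section \<open>The polynomials \<open>Q\<close>\<close>

lemma Q_param_weight_eq:
  assumes datum: "cartan_superdatum A d alpha h Iodd" and frm: "compatible_form form alpha h d"
    and Q: "Q_param form alpha A Iodd t" and nz: "t i j r s \<noteq> 0"
  shows "int r * int (d i) + int s * int (d j) = - (int (d i) * A i j)"
proof -
  have deg: "- 2 * form (alpha i) (alpha j) - of_nat r * form (alpha i) (alpha i)
      - of_nat s * form (alpha j) (alpha j) = 0"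
    using Q nz unfolding Q_param_def by blast
  have "form (alpha x) (alpha y) = of_nat (d x) * of_int (A x y)" for x y
    using frm datum unfolding compatible_form_def cartan_superdatum_def by simp
  moreover have "A x x = 2" for x
    using datum unfolding cartan_superdatum_def by simp
  ultimately have "(of_int (int r * int (d i) + int s * int (d j) + int (d i) * A i j) :: rat) = 0"
    using deg by (simp add: algebra_simps)
  then show ?thesis
    by linarith
qed

lemma Q_param_finite_support:
  assumes "cartan_superdatum A d alpha h Iodd" "compatible_form form alpha h d" "Q_param form alpha A Iodd t"
  shows "finite {(r, s). t i j r s \<noteq> 0}"
proof -
  let ?M = "nat (- (int (d i) * A i j))"
  have dpos: "d x > 0" for x
    using assms(1) unfolding cartan_superdatum_def by simp
  have "r \<le> ?M \<and> s \<le> ?M" if "t i j r s \<noteq> 0" for r s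
  proof -
    have "int r \<le> int r * int (d i)" "int s \<le> int s * int (d j)"
      using dpos[of i] dpos[of j] by (simp_all add: mult_le_cancel_left1)
    then show ?thesis
      using Q_param_weight_eq[OF assms that] by auto
  qed
  then have "{(r, s). t i j r s \<noteq> 0} \<subseteq> {..?M} \<times> {..?M}"
    by auto
  then show ?thesis
    by (rule finite_subset) simp
qed

lemma Q_param_degree_bound:
  assumes datum: "cartan_superdatum A d alpha h Iodd" and frm: "compatible_form form alpha h d"
    and Q: "Q_param form alpha A Iodd t" and nz: "t i j r s \<noteq> 0"
  shows "s \<le> nat (- A j i) \<and> (s = nat (- A j i) \<longrightarrow> r = 0)"
proof -
  have dpos: "d x > 0" for x
    using datum unfolding cartan_superdatum_def by simp
  have "i \<noteq> j"
    using Q nz unfolding Q_param_def by auto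
  then have Aji: "A j i \<le> 0"
    using datum unfolding cartan_superdatum_def by simp
  have "int (d i) * A i j = int (d j) * A j i"
    using datum unfolding cartan_superdatum_def by blast
  then have "int r * int (d i) + int s * int (d j) = - A j i * int (d j)"
    using Q_param_weight_eq[OF datum frm Q nz] by (simp add: algebra_simps)
  moreover have "0 \<le> int r * int (d i)"
    by simp
  ultimately have "int s * int (d j) \<le> - A j i * int (d j)"
    by linarith
  then have "int s \<le> - A j i"
    by (rule mult_right_le_imp_le) (simp add: dpos)
  moreover have "r = 0" if "s = nat (- A j i)"
  proof -
    have "int r * int (d i) = 0"
      using that Aji \<open>int r * int (d i) + int s * int (d j) = - A j i * int (d j)\<close> by simp
    then show ?thesis
      using dpos[of i] by simp
  qed
  ultimately show ?thesis
    by auto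
qed

lemma Q_param_top_coeff:
  assumes "Q_param form alpha A Iodd t" "i \<noteq> j"
  shows "t i j 0 (nat (- A j i)) \<noteq> 0"
  using assms unfolding Q_param_def by metis

lemma Q_eval_over [simp]: "u \<in> fa_over G \<Longrightarrow> w \<in> fa_over G \<Longrightarrow> Q_eval t i j u w \<in> fa_over G"
  unfolding Q_eval_def by (auto intro!: fa_over_sum simp: split_def)

section \<open>Cyclotomic quiver Hecke superalgebras\<close>

lemma nth1_swap1:
  assumes "length \<nu> = n" "1 \<le> a" "a < n"
  shows "nth1 (swap1 a \<nu>) a = nth1 \<nu> (a + 1)" "nth1 (swap1 a \<nu>) (a + 1) = nth1 \<nu> a"
    and "1 \<le> j \<Longrightarrow> j \<noteq> a \<Longrightarrow> j \<noteq> a + 1 \<Longrightarrow> nth1 (swap1 a \<nu>) j = nth1 \<nu> j"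
  using assms by (auto simp: nth1_def swap1_def nth_list_update)

locale cyclotomic_klr =
  fixes Iodd :: "'i set" and t :: "'i \<Rightarrow> 'i \<Rightarrow> nat \<Rightarrow> nat \<Rightarrow> 'k::field"
    and lam :: "'i \<Rightarrow> int" and n :: nat and Ib :: "'i list set" and A :: "'i \<Rightarrow> 'i \<Rightarrow> int"
  assumes swap_closed: "\<nu> \<in> Ib \<Longrightarrow> 1 \<le> a \<Longrightarrow> a < n \<Longrightarrow> swap1 a \<nu> \<in> Ib"
    and length_Ib: "\<nu> \<in> Ib \<Longrightarrow> length \<nu> = n"
    and finite_Q_support: "finite {(r, s). t i j r s \<noteq> 0}"
    and Q_degree_bound: "t i j r s \<noteq> 0 \<Longrightarrow> s \<le> nat (- A j i) \<and> (s = nat (- A j i) \<longrightarrow> r = 0)"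
    and Q_top_coeff: "i \<noteq> j \<Longrightarrow> t i j 0 (nat (- A j i)) \<noteq> 0"
    and lam_nonneg: "0 \<le> lam i"
    and off_diag_nonpos: "i \<noteq> j \<Longrightarrow> A i j \<le> 0"
begin

abbreviation Gens :: "'i gen set" where
  "Gens \<equiv> klr_gens n Ib"

text \<open>Rels is written in the simp normal form of the union in cyc_ideal_def (see cyc_ideal_eq),
  so that simplification leaves it untouched.\<close>

abbreviation Rels :: "('i, 'k) fa set" where
  "Rels \<equiv> insert (cyclo_rel lam Ib) (klr_rels Iodd t n Ib)"

abbreviation Ideal :: "('i, 'k) fa set" where
  "Ideal \<equiv> fa_ideal Gens Rels"

abbreviation klr_cong :: "('i, 'k) fa \<Rightarrow> ('i, 'k) fa \<Rightarrow> bool" (infix "\<simeq>" 50) where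
  "f \<simeq> g \<equiv> fa_cong Gens Rels f g"

lemma cyc_ideal_eq: "cyc_ideal Iodd t lam n Ib = Ideal"
  by (simp add: cyc_ideal_def)

lemma X_in_Gens [simp]: "1 \<le> p \<Longrightarrow> p \<le> n \<Longrightarrow> X p \<in> Gens"
  by (simp add: klr_gens_def)

lemma T_in_Gens [simp]: "1 \<le> a \<Longrightarrow> a < n \<Longrightarrow> T a \<in> Gens"
  by (simp add: klr_gens_def)

lemma E_in_Gens [simp]: "\<nu> \<in> Ib \<Longrightarrow> E \<nu> \<in> Gens"
  by (simp add: klr_gens_def)

lemma Xgens_subset_Gens: "m \<le> n \<Longrightarrow> Xgens m \<subseteq> Gens"
  by (auto simp: klr_gens_def Xgens_def)

lemma klr_rel: "l - r \<in> klr_rels Iodd t n Ib \<Longrightarrow> l \<simeq> r"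
  by (rule fa_cong_gen) simp

lemma e_mult_e: "\<mu> \<in> Ib \<Longrightarrow> \<nu> \<in> Ib \<Longrightarrow> fa_e \<mu> * fa_e \<nu> \<simeq> (if \<mu> = \<nu> then fa_e \<nu> else 0)"
  by (rule klr_rel) (unfold klr_rels_def fa_mult_eq_times, intro UnI1, auto)

lemma sum_e_eq_one: "(\<Sum>\<nu>\<in>Ib. fa_e \<nu>) \<simeq> 1"
  by (rule klr_rel) (unfold klr_rels_def fa_one_eq_one, blast)

lemma x_e_commute: "\<nu> \<in> Ib \<Longrightarrow> 1 \<le> p \<Longrightarrow> p \<le> n \<Longrightarrow> fa_x p * fa_e \<nu> \<simeq> fa_e \<nu> * fa_x p"
  by (rule klr_rel) (unfold klr_rels_def fa_mult_eq_times, blast)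

lemma tau_e: "\<nu> \<in> Ib \<Longrightarrow> 1 \<le> a \<Longrightarrow> a < n \<Longrightarrow> fa_t a * fa_e \<nu> \<simeq> fa_e (swap1 a \<nu>) * fa_t a"
  by (rule klr_rel) (unfold klr_rels_def fa_mult_eq_times, blast)

lemma tau_x_far:
  "\<nu> \<in> Ib \<Longrightarrow> 1 \<le> a \<Longrightarrow> a < n \<Longrightarrow> 1 \<le> p \<Longrightarrow> p \<le> n \<Longrightarrow> p \<noteq> a \<Longrightarrow> p \<noteq> a + 1 \<Longrightarrow>
   fa_t a * fa_x p * fa_e \<nu> \<simeq>
     fa_scal (sgn_k (par Iodd (nth1 \<nu> p) * par Iodd (nth1 \<nu> a) * par Iodd (nth1 \<nu> (a + 1))))
       * fa_x p * fa_t a * fa_e \<nu>"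
  by (rule klr_rel) (unfold klr_rels_def fa_mult_eq_times, blast)

lemma tau_square:
  "\<nu> \<in> Ib \<Longrightarrow> 1 \<le> a \<Longrightarrow> a < n \<Longrightarrow>
   fa_t a * fa_t a * fa_e \<nu> \<simeq> Q_eval t (nth1 \<nu> a) (nth1 \<nu> (a + 1)) (fa_x a) (fa_x (a + 1)) * fa_e \<nu>"
  by (rule klr_rel) (unfold klr_rels_def fa_mult_eq_times, blast)

lemma x_power_e_commute:
  "\<nu> \<in> Ib \<Longrightarrow> 1 \<le> p \<Longrightarrow> p \<le> n \<Longrightarrow> fa_x p ^ j * fa_e \<nu> \<simeq> fa_e \<nu> * fa_x p ^ j"
  by (rule fa_cong_commute_power[OF x_e_commute]) simp_all

definition adj_sign :: "'i list \<Rightarrow> nat \<Rightarrow> 'k" where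
  "adj_sign \<nu> a = sgn_k (par Iodd (nth1 \<nu> a) * par Iodd (nth1 \<nu> (a + 1)))"

lemma x_tau_distinct:
  assumes "\<nu> \<in> Ib" "1 \<le> a" "a < n" "nth1 \<nu> a \<noteq> nth1 \<nu> (a + 1)"
  shows "fa_x a * fa_t a * fa_e \<nu> \<simeq> fa_scal (adj_sign \<nu> a) * fa_t a * fa_x (a + 1) * fa_e \<nu>"
proof -
  let ?s = "adj_sign \<nu> a"
  have "(fa_t a * fa_x (a + 1) - fa_scal ?s * fa_x a * fa_t a) * fa_e \<nu>
      \<simeq> (if nth1 \<nu> a = nth1 \<nu> (a + 1) then fa_e \<nu> else 0)"
    using assms(1-3) by (intro klr_rel) (unfold klr_rels_def fa_mult_eq_times adj_sign_def, blast)
  then have "(fa_t a * fa_x (a + 1) - fa_scal ?s * fa_x a * fa_t a) * fa_e \<nu> \<simeq> 0"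
    using assms(4) by simp
  then have "fa_scal ?s * ((fa_t a * fa_x (a + 1) - fa_scal ?s * fa_x a * fa_t a) * fa_e \<nu>) \<simeq> fa_scal ?s * 0"
    by (rule fa_cong_left) simp
  moreover have "?s * ?s = 1"
    by (simp add: adj_sign_def sgn_k_def power_mult_distrib[symmetric])
  ultimately have "fa_scal ?s * fa_t a * fa_x (a + 1) * fa_e \<nu> \<simeq> fa_x a * fa_t a * fa_e \<nu>"
    by (simp add: fa_cong_def algebra_simps)
  then show ?thesis
    by (rule fa_cong_sym)
qed

lemma x_power_tau:
  assumes "\<nu> \<in> Ib" "1 \<le> a" "a < n" "nth1 \<nu> a \<noteq> nth1 \<nu> (a + 1)"
  shows "fa_x a ^ j * fa_t a * fa_e \<nu> \<simeq>
    fa_scal (adj_sign \<nu> a ^ j) * fa_t a * fa_x (a + 1) ^ j * fa_e \<nu>"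
  using assms by (intro fa_cong_pass_power x_tau_distinct x_e_commute) simp_all

definition tau_sign :: "'i list \<Rightarrow> nat \<Rightarrow> 'i gen \<Rightarrow> 'k" where
  "tau_sign \<mu> a l = (case l of
     X p \<Rightarrow> sgn_k (par Iodd (nth1 \<mu> p) * par Iodd (nth1 \<mu> a) * par Iodd (nth1 \<mu> (a + 1)))
   | _ \<Rightarrow> 1)"

lemma tau_pass_poly:
  assumes "\<mu> \<in> Ib" "1 \<le> a" "a < n" "c \<in> fa_over (Xgens (a - 1))"
  shows "fa_t a * c * fa_e \<mu> \<simeq> fa_twist (tau_sign \<mu> a) c * fa_t a * fa_e \<mu>"
proof (rule fa_cong_pass_poly[OF assms(4)])
  show "Xgens (a - 1) \<subseteq> Gens"
    using assms by (intro Xgens_subset_Gens) simp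
  show "\<forall>l\<in>Xgens (a - 1). fa_gen l * fa_e \<mu> \<simeq> fa_e \<mu> * fa_gen l"
    using assms by (auto simp: Xgens_def intro!: x_e_commute)
  show "\<forall>l\<in>Xgens (a - 1). fa_t a * fa_gen l * fa_e \<mu> \<simeq> fa_scal (tau_sign \<mu> a l) * fa_gen l * fa_t a * fa_e \<mu>"
  proof
    fix l :: "'i gen"
    assume "l \<in> Xgens (a - 1)"
    then obtain p where p: "l = X p" "1 \<le> p" "p < a"
      by (auto simp: Xgens_def)
    show "fa_t a * fa_gen l * fa_e \<mu> \<simeq> fa_scal (tau_sign \<mu> a l) * fa_gen l * fa_t a * fa_e \<mu>"
      unfolding p(1) tau_sign_def gen.case using assms p by (intro tau_x_far) auto
  qed
qed (use assms in simp_all)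

lemma x_power_e_tau:
  assumes \<nu>: "\<nu> \<in> Ib" and a: "1 \<le> a" "a < n" and dif: "nth1 \<nu> a \<noteq> nth1 \<nu> (a + 1)"
  shows "fa_x a ^ j * fa_e (swap1 a \<nu>) * fa_t a \<simeq>
    fa_scal (adj_sign \<nu> a ^ j) * fa_t a * fa_e \<nu> * fa_x (a + 1) ^ j"
proof -
  let ?s = "adj_sign \<nu> a"
  have "fa_x a ^ j * fa_e (swap1 a \<nu>) * fa_t a = fa_x a ^ j * (fa_e (swap1 a \<nu>) * fa_t a)"
    by (simp add: mult.assoc)
  also have "\<dots> \<simeq> fa_x a ^ j * (fa_t a * fa_e \<nu>)"
    by (rule fa_cong_left[OF fa_cong_sym[OF tau_e[OF \<nu> a]]]) (use a in simp)
  also have "\<dots> = fa_x a ^ j * fa_t a * fa_e \<nu>"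
    by (simp add: mult.assoc)
  also have "\<dots> \<simeq> fa_scal (?s ^ j) * fa_t a * fa_x (a + 1) ^ j * fa_e \<nu>"
    by (rule x_power_tau[OF \<nu> a dif])
  also have "\<dots> = fa_scal (?s ^ j) * fa_t a * (fa_x (a + 1) ^ j * fa_e \<nu>)"
    by (simp add: mult.assoc)
  also have "\<dots> \<simeq> fa_scal (?s ^ j) * fa_t a * (fa_e \<nu> * fa_x (a + 1) ^ j)"
    by (rule fa_cong_left[OF x_power_e_commute[OF \<nu>]]) (use a in simp_all)
  finally show ?thesis
    by (simp add: mult.assoc)
qed

lemma tau_sandwich:
  assumes \<nu>: "\<nu> \<in> Ib" and a: "1 \<le> a" "a < n" and c: "c \<in> fa_over (Xgens (a - 1))"
  shows "fa_t a * c * fa_t a * fa_e \<nu> \<simeq>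
    fa_twist (tau_sign (swap1 a \<nu>) a) c * Q_eval t (nth1 \<nu> a) (nth1 \<nu> (a + 1)) (fa_x a) (fa_x (a + 1)) * fa_e \<nu>"
proof -
  let ?\<nu>' = "swap1 a \<nu>" and ?T = "fa_t a"
  let ?g = "fa_twist (tau_sign ?\<nu>' a) c"
  have \<nu>': "?\<nu>' \<in> Ib"
    using \<nu> a by (rule swap_closed)
  have cG: "c \<in> fa_over Gens"
    by (rule fa_over_mono[OF c Xgens_subset_Gens]) (use a in simp)
  note mem = a \<nu> \<nu>' cG fa_twist_over[OF cG]
  have "?T * c * ?T * fa_e \<nu> = ?T * c * (?T * fa_e \<nu>)"
    by (simp add: mult.assoc)
  also have "\<dots> \<simeq> ?T * c * (fa_e ?\<nu>' * ?T)"
    by (rule fa_cong_left[OF tau_e[OF \<nu> a]]) (use mem in simp)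
  also have "\<dots> = (?T * c * fa_e ?\<nu>') * ?T"
    by (simp add: mult.assoc)
  also have "\<dots> \<simeq> (?g * ?T * fa_e ?\<nu>') * ?T"
    by (rule fa_cong_right[OF tau_pass_poly[OF \<nu>' a c]]) (use mem in simp)
  also have "\<dots> = (?g * ?T) * (fa_e ?\<nu>' * ?T)"
    by (simp add: mult.assoc)
  also have "\<dots> \<simeq> (?g * ?T) * (?T * fa_e \<nu>)"
    by (rule fa_cong_left[OF fa_cong_sym[OF tau_e[OF \<nu> a]]]) (use mem in simp)
  also have "\<dots> = ?g * (?T * ?T * fa_e \<nu>)"
    by (simp add: mult.assoc)
  also have "\<dots> \<simeq> ?g * (Q_eval t (nth1 \<nu> a) (nth1 \<nu> (a + 1)) (fa_x a) (fa_x (a + 1)) * fa_e \<nu>)"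
    by (rule fa_cong_left[OF tau_square[OF \<nu> a]]) (use mem in simp)
  finally show ?thesis
    by (simp add: mult.assoc)
qed

lemma tau_conjugate:
  assumes \<nu>: "\<nu> \<in> Ib" and a: "1 \<le> a" "a < n" and dif: "nth1 \<nu> a \<noteq> nth1 \<nu> (a + 1)"
    and c: "c \<in> fa_over (Xgens (a - 1))"
  shows "fa_t a * (c * fa_x a ^ j * fa_e (swap1 a \<nu>)) * fa_t a \<simeq>
    fa_scal (adj_sign \<nu> a ^ j)
      * fa_twist (tau_sign (swap1 a \<nu>) a) c * Q_eval t (nth1 \<nu> a) (nth1 \<nu> (a + 1)) (fa_x a) (fa_x (a + 1))
      * (fa_x (a + 1) ^ j * fa_e \<nu>)"
proof -
  let ?T = "fa_t a" and ?X = "fa_x (a + 1)"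
  let ?s = "adj_sign \<nu> a"
  let ?g = "fa_twist (tau_sign (swap1 a \<nu>) a) c"
  let ?Q = "Q_eval t (nth1 \<nu> a) (nth1 \<nu> (a + 1)) (fa_x a) ?X"
  have cG: "c \<in> fa_over Gens"
    by (rule fa_over_mono[OF c Xgens_subset_Gens]) (use a in simp)
  note mem = a \<nu> cG fa_twist_over[OF cG]
  have "?T * (c * fa_x a ^ j * fa_e (swap1 a \<nu>)) * ?T = ?T * c * (fa_x a ^ j * fa_e (swap1 a \<nu>) * ?T)"
    by (simp add: mult.assoc)
  also have "\<dots> \<simeq> ?T * c * (fa_scal (?s ^ j) * ?T * fa_e \<nu> * ?X ^ j)"
    by (rule fa_cong_left[OF x_power_e_tau[OF \<nu> a dif]]) (use mem in simp)
  also have "\<dots> = fa_scal (?s ^ j) * (?T * c * ?T * fa_e \<nu>) * ?X ^ j"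
    by (simp add: mult.assoc fa_scal_left_commute[of ?T] fa_scal_left_commute[of c])
  also have "\<dots> \<simeq> fa_scal (?s ^ j) * (?g * ?Q * fa_e \<nu>) * ?X ^ j"
    by (rule fa_cong_mult[OF tau_sandwich[OF \<nu> a c]]) (use mem in simp_all)
  also have "\<dots> = fa_scal (?s ^ j) * ?g * ?Q * (fa_e \<nu> * ?X ^ j)"
    by (simp add: mult.assoc)
  also have "\<dots> \<simeq> fa_scal (?s ^ j) * ?g * ?Q * (?X ^ j * fa_e \<nu>)"
    by (rule fa_cong_left[OF fa_cong_sym[OF x_power_e_commute[OF \<nu>]]]) (use mem in simp_all)
  finally show ?thesis .
qed

lemma tau_conjugate_poly:
  assumes \<nu>: "\<nu> \<in> Ib" and a: "1 \<le> a" "a < n" and dif: "nth1 \<nu> a \<noteq> nth1 \<nu> (a + 1)"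
    and cf: "\<forall>j\<le>N. coef j \<in> fa_over (Xgens (a - 1))"
  shows "fa_t a * ((\<Sum>j\<le>N. coef j * fa_x a ^ j) * fa_e (swap1 a \<nu>)) * fa_t a \<simeq>
    (\<Sum>(j, r, s)\<in>{..N} \<times> {(r, s). t (nth1 \<nu> a) (nth1 \<nu> (a + 1)) r s \<noteq> 0}.
       fa_scal (adj_sign \<nu> a ^ j * t (nth1 \<nu> a) (nth1 \<nu> (a + 1)) r s)
         * fa_twist (tau_sign (swap1 a \<nu>) a) (coef j) * fa_x a ^ r * fa_x (a + 1) ^ (s + j)) * fa_e \<nu>"
proof -
  let ?s = "adj_sign \<nu> a"
  let ?g = "\<lambda>j. fa_twist (tau_sign (swap1 a \<nu>) a) (coef j)"
  let ?St = "{(r, s). t (nth1 \<nu> a) (nth1 \<nu> (a + 1)) r s \<noteq> 0}"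
  have "fa_t a * ((\<Sum>j\<le>N. coef j * fa_x a ^ j) * fa_e (swap1 a \<nu>)) * fa_t a
      = (\<Sum>j\<le>N. fa_t a * (coef j * fa_x a ^ j * fa_e (swap1 a \<nu>)) * fa_t a)"
    by (simp add: sum_distrib_left sum_distrib_right)
  also have "\<dots> \<simeq> (\<Sum>j\<le>N. fa_scal (?s ^ j) * ?g j
      * Q_eval t (nth1 \<nu> a) (nth1 \<nu> (a + 1)) (fa_x a) (fa_x (a + 1)) * (fa_x (a + 1) ^ j * fa_e \<nu>))"
  proof (rule fa_cong_sum)
    fix j
    assume "j \<in> {..N}"
    then have "coef j \<in> fa_over (Xgens (a - 1))"
      using cf by simp
    then show "fa_t a * (coef j * fa_x a ^ j * fa_e (swap1 a \<nu>)) * fa_t a \<simeq> fa_scal (?s ^ j) * ?g j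
      * Q_eval t (nth1 \<nu> a) (nth1 \<nu> (a + 1)) (fa_x a) (fa_x (a + 1)) * (fa_x (a + 1) ^ j * fa_e \<nu>)"
      by (rule tau_conjugate[OF \<nu> a dif])
  qed
  also have "\<dots> = (\<Sum>j\<le>N. \<Sum>(r, s)\<in>?St. fa_scal (?s ^ j * t (nth1 \<nu> a) (nth1 \<nu> (a + 1)) r s)
      * ?g j * fa_x a ^ r * fa_x (a + 1) ^ (s + j) * fa_e \<nu>)"
  proof (rule sum.cong[OF refl])
    fix j
    have "fa_scal (?s ^ j) * ?g j * (fa_scal (t (nth1 \<nu> a) (nth1 \<nu> (a + 1)) r s) * fa_x a ^ r * fa_x (a + 1) ^ s)
        * (fa_x (a + 1) ^ j * fa_e \<nu>) = fa_scal (?s ^ j * t (nth1 \<nu> a) (nth1 \<nu> (a + 1)) r s)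
        * ?g j * fa_x a ^ r * fa_x (a + 1) ^ (s + j) * fa_e \<nu>" for r s
      by (simp only: mult.assoc power_add fa_scal_left_commute[of "?g j"] fa_scal_mult_left)
    then show "fa_scal (?s ^ j) * ?g j * Q_eval t (nth1 \<nu> a) (nth1 \<nu> (a + 1)) (fa_x a) (fa_x (a + 1))
        * (fa_x (a + 1) ^ j * fa_e \<nu>) = (\<Sum>(r, s)\<in>?St. fa_scal (?s ^ j * t (nth1 \<nu> a) (nth1 \<nu> (a + 1)) r s)
        * ?g j * fa_x a ^ r * fa_x (a + 1) ^ (s + j) * fa_e \<nu>)"
      by (simp add: Q_eval_def sum_distrib_left sum_distrib_right case_prod_beta)
  qed
  finally show ?thesis
    by (simp add: sum.cartesian_product sum_distrib_right split_def)
qed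

text \<open>The coefficient of x_{a+1}^m in \<tau>_a f(x_a) e(s_a \<nu>) \<tau>_a, where f = \<Sum>_{j\<le>N} coef j x_a^j.\<close>

definition tau_conj_coeff :: "'i list \<Rightarrow> nat \<Rightarrow> (nat \<Rightarrow> ('i, 'k) fa) \<Rightarrow> nat \<Rightarrow> nat \<Rightarrow> ('i, 'k) fa" where
  "tau_conj_coeff \<nu> a coef N m =
     (\<Sum>(j, r, s)\<in>{(j, r, s). j \<le> N \<and> t (nth1 \<nu> a) (nth1 \<nu> (a + 1)) r s \<noteq> 0 \<and> s + j = m}.
        fa_scal (adj_sign \<nu> a ^ j * t (nth1 \<nu> a) (nth1 \<nu> (a + 1)) r s)
          * fa_twist (tau_sign (swap1 a \<nu>) a) (coef j) * fa_x a ^ r)"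

lemma tau_conj_coeff_over:
  assumes "1 \<le> a" "\<forall>j\<le>N. coef j \<in> fa_over (Xgens (a - 1))"
  shows "tau_conj_coeff \<nu> a coef N m \<in> fa_over (Xgens a)"
proof -
  have sub: "Xgens (a - 1) \<subseteq> (Xgens a :: 'i gen set)" and "X a \<in> (Xgens a :: 'i gen set)"
    using assms(1) by (auto simp: Xgens_def)
  moreover have "fa_twist (tau_sign (swap1 a \<nu>) a) (coef j) \<in> fa_over (Xgens a)" if "j \<le> N" for j
    using assms(2) that by (intro fa_twist_over fa_over_mono[OF _ sub]) simp
  ultimately show ?thesis
    unfolding tau_conj_coeff_def by (auto intro!: fa_over_sum)
qed

lemma tau_conj_coeff_top:
  assumes dif: "nth1 \<nu> a \<noteq> nth1 \<nu> (a + 1)" and top: "coef N = fa_scal c0"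
  shows "tau_conj_coeff \<nu> a coef N (N + nat (- A (nth1 \<nu> (a + 1)) (nth1 \<nu> a)))
    = fa_scal (adj_sign \<nu> a ^ N * t (nth1 \<nu> a) (nth1 \<nu> (a + 1)) 0 (nat (- A (nth1 \<nu> (a + 1)) (nth1 \<nu> a))) * c0)"
proof -
  let ?d = "nat (- A (nth1 \<nu> (a + 1)) (nth1 \<nu> a))"
  have "{(j, r, s). j \<le> N \<and> t (nth1 \<nu> a) (nth1 \<nu> (a + 1)) r s \<noteq> 0 \<and> s + j = N + ?d} = {(N, 0, ?d)}"
    using Q_degree_bound[of "nth1 \<nu> a" "nth1 \<nu> (a + 1)"] Q_top_coeff[OF dif] by fastforce
  then show ?thesis
    by (simp add: tau_conj_coeff_def top fa_scal_mult)
qed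

lemma tau_conjugate_annihilator:
  assumes \<nu>: "\<nu> \<in> Ib" and a: "1 \<le> a" "a < n" and dif: "nth1 \<nu> a \<noteq> nth1 \<nu> (a + 1)"
    and cf: "\<forall>j\<le>N. coef j \<in> fa_over (Xgens (a - 1))"
    and killed: "(\<Sum>j\<le>N. coef j * fa_x a ^ j) * fa_e (swap1 a \<nu>) \<in> Ideal"
  shows "(\<Sum>m\<le>N + nat (- A (nth1 \<nu> (a + 1)) (nth1 \<nu> a)). tau_conj_coeff \<nu> a coef N m * fa_x (a + 1) ^ m) * fa_e \<nu>
    \<in> Ideal"
proof -
  let ?K = "{..N} \<times> {(r, s). t (nth1 \<nu> a) (nth1 \<nu> (a + 1)) r s \<noteq> 0}"
  let ?deg = "\<lambda>(j :: nat, r :: nat, s). s + j"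
  let ?F = "\<lambda>(j, r, s). fa_scal (adj_sign \<nu> a ^ j * t (nth1 \<nu> a) (nth1 \<nu> (a + 1)) r s)
    * fa_twist (tau_sign (swap1 a \<nu>) a) (coef j) * fa_x a ^ r"
  let ?D = "N + nat (- A (nth1 \<nu> (a + 1)) (nth1 \<nu> a))"
  have "fa_t a * ((\<Sum>j\<le>N. coef j * fa_x a ^ j) * fa_e (swap1 a \<nu>)) * fa_t a \<in> Ideal"
    using killed a by (intro fa_ideal_mult) simp_all
  then have mem: "(\<Sum>k\<in>?K. ?F k * fa_x (a + 1) ^ ?deg k) * fa_e \<nu> \<in> Ideal"
    using fa_cong_ideal[OF fa_cong_sym[OF tau_conjugate_poly[OF \<nu> a dif cf]]] by (simp add: split_def)
  have fin: "finite ?K"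
    using finite_Q_support by simp
  have bound: "?deg k \<le> ?D" if "k \<in> ?K" for k
  proof -
    from that obtain j r s where "k = (j, r, s)" "j \<le> N" and nz: "t (nth1 \<nu> a) (nth1 \<nu> (a + 1)) r s \<noteq> 0"
      by blast
    then show ?thesis
      using Q_degree_bound[OF nz] by simp
  qed
  have "(\<Sum>m\<le>?D. (\<Sum>k | k \<in> ?K \<and> ?deg k = m. ?F k) * fa_x (a + 1) ^ m) * fa_e \<nu> \<in> Ideal"
    using mem by (simp only: sum_collect_powers[OF fin bound])
  moreover have "(\<Sum>k | k \<in> ?K \<and> ?deg k = m. ?F k) = tau_conj_coeff \<nu> a coef N m" for m
    unfolding tau_conj_coeff_def by (rule sum.cong) auto
  ultimately show ?thesis
    by simp
qed

definition annihilated_in_degree :: "'i list \<Rightarrow> nat \<Rightarrow> nat \<Rightarrow> bool" where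
  "annihilated_in_degree \<nu> k N \<longleftrightarrow>
     (\<exists>coef c0. c0 \<noteq> 0 \<and> coef N = fa_scal c0 \<and> (\<forall>j\<le>N. coef j \<in> fa_over (Xgens (k - 1))) \<and>
        (\<Sum>j\<le>N. coef j * fa_x k ^ j) * fa_e \<nu> \<in> Ideal)"

lemma annihilated_in_degree_pol_unit:
  assumes "annihilated_in_degree \<nu> (k + 1) N"
  shows "\<exists>coef. (\<forall>j\<le>N. coef j \<in> fa_over (Xgens k)) \<and> pol_unit Iodd (take k \<nu>) (coef N) \<and>
    (\<Sum>j\<le>N. coef j * fa_x (k + 1) ^ j) * fa_e \<nu> \<in> Ideal"
  using assms unfolding annihilated_in_degree_def by (auto simp: pol_unit_scal)

lemma annihilated_step:
  assumes \<nu>: "\<nu> \<in> Ib" and a: "1 \<le> a" "a < n" and dif: "nth1 \<nu> a \<noteq> nth1 \<nu> (a + 1)"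
    and ann: "annihilated_in_degree (swap1 a \<nu>) a N"
  shows "annihilated_in_degree \<nu> (a + 1) (N + nat (- A (nth1 \<nu> (a + 1)) (nth1 \<nu> a)))"
proof -
  obtain coef c0 where c0: "c0 \<noteq> 0" "coef N = fa_scal c0"
    and cf: "\<forall>j\<le>N. coef j \<in> fa_over (Xgens (a - 1))"
    and killed: "(\<Sum>j\<le>N. coef j * fa_x a ^ j) * fa_e (swap1 a \<nu>) \<in> Ideal"
    using ann unfolding annihilated_in_degree_def by auto
  have "adj_sign \<nu> a ^ N * t (nth1 \<nu> a) (nth1 \<nu> (a + 1)) 0 (nat (- A (nth1 \<nu> (a + 1)) (nth1 \<nu> a))) * c0 \<noteq> 0"
    using c0 Q_top_coeff[OF dif] by (simp add: adj_sign_def sgn_k_def)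
  then show ?thesis
    unfolding annihilated_in_degree_def
    using tau_conj_coeff_top[where coef = coef and N = N, OF dif c0(2)] tau_conj_coeff_over[OF a(1) cf] tau_conjugate_annihilator[OF \<nu> a dif cf killed]
    by (intro exI[of _ "tau_conj_coeff \<nu> a coef N"]
        exI[of _ "adj_sign \<nu> a ^ N * t (nth1 \<nu> a) (nth1 \<nu> (a + 1)) 0 (nat (- A (nth1 \<nu> (a + 1)) (nth1 \<nu> a))) * c0"])
      auto
qed

text \<open>If Ib were infinite, the sum of all e(\<nu>) would be the junk value 0, and the relation
  stating that this sum is 1 would make the ideal trivial.\<close>

lemma cyclotomic_base:
  assumes \<nu>: "\<nu> \<in> Ib" and n: "1 \<le> n"
  shows "fa_x 1 ^ nat (lam (nth1 \<nu> 1)) * fa_e \<nu> \<in> Ideal"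
proof (cases "finite Ib")
  case False
  then have "- 1 \<in> Ideal"
    using sum_e_eq_one by (simp add: fa_cong_def)
  then have "(- (fa_x 1 ^ nat (lam (nth1 \<nu> 1)) * fa_e \<nu>)) * (- 1) \<in> Ideal"
    by (rule fa_ideal_left) (use \<nu> n in simp)
  then show ?thesis
    by simp
next
  case True
  have "fa_x 1 ^ nat (lam (nth1 \<nu> 1)) * fa_e \<nu>
      = (\<Sum>\<mu>\<in>Ib. fa_x 1 ^ nat (lam (nth1 \<mu> 1)) * (if \<mu> = \<nu> then fa_e \<nu> else 0))"
    using True \<nu> by (simp add: if_distrib[where f = "\<lambda>x. _ * x"] sum.delta' cong: if_cong)
  also have "\<dots> \<simeq> (\<Sum>\<mu>\<in>Ib. fa_x 1 ^ nat (lam (nth1 \<mu> 1)) * (fa_e \<mu> * fa_e \<nu>))"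
    using \<nu> n by (intro fa_cong_sum fa_cong_left fa_cong_sym[OF e_mult_e]) simp_all
  also have "\<dots> = cyclo_rel lam Ib * fa_e \<nu>"
    by (simp add: cyclo_rel_def sum_distrib_right mult.assoc)
  finally show ?thesis
    by (rule fa_cong_ideal) (use \<nu> in \<open>simp add: fa_ideal_right fa_ideal.gen\<close>)
qed

definition cyclotomic_degree :: "'i list \<Rightarrow> nat \<Rightarrow> nat" where
  "cyclotomic_degree \<nu> k = nat (lam (nth1 \<nu> k) - (\<Sum>j=1..k - 1. A (nth1 \<nu> k) (nth1 \<nu> j)))"

lemma cyclotomic_degree_step:
  assumes len: "length \<nu> = n" and a: "1 \<le> a" "a < n"
    and dist: "\<forall>j. 1 \<le> j \<and> j \<le> a \<longrightarrow> nth1 \<nu> j \<noteq> nth1 \<nu> (a + 1)"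
  shows "cyclotomic_degree \<nu> (a + 1) = cyclotomic_degree (swap1 a \<nu>) a + nat (- A (nth1 \<nu> (a + 1)) (nth1 \<nu> a))"
proof -
  let ?i = "nth1 \<nu> (a + 1)"
  let ?S = "\<Sum>j=1..a - 1. A ?i (nth1 \<nu> j)"
  have "?S \<le> 0"
    using dist by (intro sum_nonpos off_diag_nonpos) auto
  moreover have "A ?i (nth1 \<nu> a) \<le> 0"
    using dist a by (intro off_diag_nonpos) auto
  moreover have "(\<Sum>j=1..a. A ?i (nth1 \<nu> j)) = ?S + A ?i (nth1 \<nu> a)"
    using a by (cases a) (auto simp: sum.cl_ivl_Suc)
  moreover have "(\<Sum>j=1..a - 1. A ?i (nth1 (swap1 a \<nu>) j)) = ?S"
    using nth1_swap1[OF len a] by (intro sum.cong) auto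
  ultimately show ?thesis
    using lam_nonneg[of ?i] nth1_swap1[OF len a] by (simp add: cyclotomic_degree_def nat_diff_distrib')
qed

theorem annihilated_cyclotomic_degree:
  "1 \<le> k \<Longrightarrow> k \<le> n \<Longrightarrow> \<nu> \<in> Ib \<Longrightarrow> \<forall>j. 1 \<le> j \<and> j < k \<longrightarrow> nth1 \<nu> j \<noteq> nth1 \<nu> k \<Longrightarrow>
   annihilated_in_degree \<nu> k (cyclotomic_degree \<nu> k)"
proof (induct k arbitrary: \<nu>)
  case (Suc a)
  show ?case
  proof (cases "a = 0")
    case True
    let ?N = "nat (lam (nth1 \<nu> 1))"
    have "(\<Sum>j\<le>?N. (if j = ?N then 1 else 0) * fa_x 1 ^ j) * fa_e \<nu> \<in> Ideal"
      using cyclotomic_base[OF Suc.prems(3)] Suc.prems(2) True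
      by (simp add: if_distrib[where f = "\<lambda>x. x * _"] cong: if_cong)
    then show ?thesis
      unfolding annihilated_in_degree_def cyclotomic_degree_def using True
      by (intro exI[of _ "\<lambda>j. if j = ?N then 1 else 0"] exI[of _ 1]) auto
  next
    case False
    then have a: "1 \<le> a" "a < n"
      using Suc.prems by auto
    have len: "length \<nu> = n"
      using Suc.prems(3) by (rule length_Ib)
    have dist: "\<forall>j. 1 \<le> j \<and> j \<le> a \<longrightarrow> nth1 \<nu> j \<noteq> nth1 \<nu> (a + 1)"
      using Suc.prems(4) by auto
    have "annihilated_in_degree (swap1 a \<nu>) a (cyclotomic_degree (swap1 a \<nu>) a)"
      using Suc.prems(4) nth1_swap1[OF len a] swap_closed[OF Suc.prems(3) a] a
      by (intro Suc.hyps) auto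
    moreover have "nth1 \<nu> a \<noteq> nth1 \<nu> (a + 1)"
      using dist a by auto
    ultimately have "annihilated_in_degree \<nu> (a + 1) (cyclotomic_degree \<nu> (a + 1))"
      unfolding cyclotomic_degree_step[OF len a dist] by (intro annihilated_step[OF Suc.prems(3) a])
    then show ?thesis
      by simp
  qed
qed simp

end

section \<open>Sequences made of blocks\<close>

lemma sum_lessThan_nth_eq_sum_list: "length \<nu> = n \<Longrightarrow> (\<Sum>s<n. f (\<nu> ! s)) = sum_list (map f \<nu>)"
  by (simp add: sum_list_sum_nth atLeast0LessThan)

lemma Ibeta_swap1:
  assumes "\<nu> \<in> Ibeta alpha n \<beta>" "1 \<le> a" "a < n"
  shows "swap1 a \<nu> \<in> Ibeta alpha n \<beta>"
proof -
  have len: "length \<nu> = n" and len': "length (swap1 a \<nu>) = n"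
    using assms by (simp_all add: Ibeta_def swap1_def)
  have "mset (swap1 a \<nu>) = mset \<nu>"
    unfolding swap1_def using len assms by (intro mset_swap) auto
  then have "sum_list (map alpha (swap1 a \<nu>)) = sum_list (map alpha \<nu>)"
    by (metis mset_map sum_mset_sum_list)
  then show ?thesis
    using assms len len' by (simp add: Ibeta_def sum_lessThan_nth_eq_sum_list)
qed

lemma cyclotomic_klr_Ibeta:
  assumes datum: "cartan_superdatum A d alpha h Iodd" and frm: "compatible_form form alpha h d"
    and Q: "Q_param form alpha A Iodd t" and dom: "\<forall>i. h i Lam \<ge> 0"
  shows "cyclotomic_klr t (\<lambda>j. h j Lam) n (Ibeta alpha n \<beta>) A"
proof
  show "\<nu> \<in> Ibeta alpha n \<beta> \<Longrightarrow> 1 \<le> a \<Longrightarrow> a < n \<Longrightarrow> swap1 a \<nu> \<in> Ibeta alpha n \<beta>" for \<nu> a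
    by (rule Ibeta_swap1)
  show "\<nu> \<in> Ibeta alpha n \<beta> \<Longrightarrow> length \<nu> = n" for \<nu>
    by (simp add: Ibeta_def)
  show "finite {(r, s). t i j r s \<noteq> 0}" for i j
    using datum frm Q by (rule Q_param_finite_support)
  show "t i j r s \<noteq> 0 \<Longrightarrow> s \<le> nat (- A j i) \<and> (s = nat (- A j i) \<longrightarrow> r = 0)" for i j r s
    using datum frm Q by (rule Q_param_degree_bound)
  show "i \<noteq> j \<Longrightarrow> t i j 0 (nat (- A j i)) \<noteq> 0" for i j
    using Q by (rule Q_param_top_coeff)
  show "0 \<le> h i Lam" for i
    using dom by simp
  show "i \<noteq> j \<Longrightarrow> A i j \<le> 0" for i j
    using datum by (simp add: cartan_superdatum_def)
qed

lemma cartan_pairing_diff_sum: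
  assumes "cartan_superdatum A d alpha h Iodd"
  shows "h i (x - (\<Sum>j\<in>J. alpha (f j))) = h i x - (\<Sum>j\<in>J. A i (f j))"
proof -
  have add: "h i (x + y) = h i x + h i y" for x y
    using assms by (simp add: cartan_superdatum_def)
  have "h i 0 = 0"
    using add[of 0 0] by simp
  then have "h i (\<Sum>j\<in>J. alpha (f j)) = (\<Sum>j\<in>J. A i (f j))"
    using assms by (induct J rule: infinite_finite_induct) (simp_all add: add cartan_superdatum_def)
  moreover have "h i (x - y) = h i x - h i y" for y
    using add[of "x - y" y] by simp
  ultimately show ?thesis
    by simp
qed

lemma zsmul_int_eq_sum_list: "zsmul (int m) x = sum_list (replicate m x)"
proof (rule poly_mapping_eqI)
  fix k
  have "Poly_Mapping.lookup (zsmul c x) k = c * Poly_Mapping.lookup x k" for c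
    by (simp add: zsmul_def Poly_Mapping.map.rep_eq when_def)
  moreover have "Poly_Mapping.lookup (sum_list (replicate m x)) k = int m * Poly_Mapping.lookup x k"
    by (induct m) (simp_all add: lookup_add algebra_simps)
  ultimately show "Poly_Mapping.lookup (zsmul (int m) x) k = Poly_Mapping.lookup (sum_list (replicate m x)) k"
    by simp
qed

lemma sum_list_concat: "sum_list (concat xss) = sum_list (map sum_list xss)"
  by (induct xss) simp_all

definition block_word :: "(nat \<Rightarrow> nat) \<Rightarrow> (nat \<Rightarrow> 'i) \<Rightarrow> nat \<Rightarrow> 'i list" where
  "block_word b nus p = concat (map (\<lambda>l. replicate (b l) (nus l)) [1..<p + 1])"

lemma length_block_word: "length (block_word b nus p) = (\<Sum>l=1..p. b l)"
proof -
  have "length (block_word b nus p) = sum_list (map b [1..<p + 1])"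
    by (simp add: block_word_def length_concat o_def del: upt_Suc)
  also have "\<dots> = (\<Sum>l\<in>{1..<p + 1}. b l)"
    by (simp only: sum_set_upt_conv_sum_list_nat[symmetric] set_upt)
  finally show ?thesis
    by (simp add: atLeastLessThanSuc_atLeastAtMost)
qed

lemma block_word_Ibeta:
  "block_word b nus p \<in> Ibeta alpha (\<Sum>l=1..p. b l) (\<Sum>l=1..p. zsmul (int (b l)) (alpha (nus l)))"
proof -
  have "sum_list (map alpha (block_word b nus p))
      = sum_list (map (\<lambda>l. sum_list (replicate (b l) (alpha (nus l)))) [1..<p + 1])"
    by (simp add: block_word_def map_concat sum_list_concat o_def del: upt_Suc)
  also have "\<dots> = (\<Sum>l\<in>{1..<p + 1}. zsmul (int (b l)) (alpha (nus l)))"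
    by (simp only: zsmul_int_eq_sum_list sum_set_upt_conv_sum_list_nat[symmetric] set_upt)
  also have "\<dots> = (\<Sum>l=1..p. zsmul (int (b l)) (alpha (nus l)))"
    by (simp add: atLeastLessThanSuc_atLeastAtMost)
  finally show ?thesis
    by (simp add: Ibeta_def length_block_word sum_lessThan_nth_eq_sum_list)
qed

lemma set_block_word: "set (block_word b nus p) \<subseteq> nus ` {1..p}"
  by (auto simp: block_word_def)

lemma block_word_split:
  assumes "i \<in> {1..p}"
  shows "block_word b nus p
    = block_word b nus (i - 1) @ replicate (b i) (nus i) @ concat (map (\<lambda>l. replicate (b l) (nus l)) [i + 1..<p + 1])"
proof -
  have "[1..<p + 1] = [1..<i] @ [i..<p + 1]"
    using upt_add_eq_append[of 1 i "p + 1 - i"] assms by simp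
  also have "[i..<p + 1] = i # [i + 1..<p + 1]"
    using assms by (simp add: upt_conv_Cons)
  finally show ?thesis
    using assms by (simp add: block_word_def)
qed

lemma block_word_first_of_block:
  assumes i: "i \<in> {1..p}" and bi: "1 \<le> b i"
  shows "(\<Sum>l=1..i - 1. b l) < length (block_word b nus p)"
    and "nth1 (block_word b nus p) ((\<Sum>l=1..i - 1. b l) + 1) = nus i"
    and "inj_on nus {1..p} \<Longrightarrow> 1 \<le> j \<Longrightarrow> j \<le> (\<Sum>l=1..i - 1. b l) \<Longrightarrow> nth1 (block_word b nus p) j \<noteq> nus i"
proof -
  note split = block_word_split[OF i, of b nus]
  have len: "length (block_word b nus (i - 1)) = (\<Sum>l=1..i - 1. b l)"
    by (rule length_block_word)
  show "(\<Sum>l=1..i - 1. b l) < length (block_word b nus p)"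
    using bi len by (subst split) simp
  show "nth1 (block_word b nus p) ((\<Sum>l=1..i - 1. b l) + 1) = nus i"
    using bi len by (subst split) (simp add: nth1_def nth_append)
  assume inj: "inj_on nus {1..p}" and j: "1 \<le> j" "j \<le> (\<Sum>l=1..i - 1. b l)"
  then have "j - 1 < length (block_word b nus (i - 1))"
    using len by linarith
  then have "nth1 (block_word b nus p) j \<in> set (block_word b nus (i - 1))"
    by (simp add: split nth1_def nth_append)
  then obtain l where "l \<in> {1..i - 1}" "nth1 (block_word b nus p) j = nus l"
    using set_block_word[of b nus "i - 1"] by blast
  then show "nth1 (block_word b nus p) j \<noteq> nus i"
    using inj i by (auto dest: inj_onD)
qed

theorem lemma4p18:
  fixes A :: "'i \<Rightarrow> 'i \<Rightarrow> int" and d :: "'i \<Rightarrow> nat" and Iodd :: "'i set"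
    and alpha :: "'i \<Rightarrow> ('b \<Rightarrow>\<^sub>0 int)" and h :: "'i \<Rightarrow> ('b \<Rightarrow>\<^sub>0 int) \<Rightarrow> int"
    and form :: "('b \<Rightarrow>\<^sub>0 int) \<Rightarrow> ('b \<Rightarrow>\<^sub>0 int) \<Rightarrow> rat"
    and t :: "'i \<Rightarrow> 'i \<Rightarrow> nat \<Rightarrow> nat \<Rightarrow> 'k::field"
    and Lam :: "'b \<Rightarrow>\<^sub>0 int" and p :: nat and b :: "nat \<Rightarrow> nat" and nus :: "nat \<Rightarrow> 'i"
  assumes char: "(2::'k) \<noteq> 0"
    and datum: "cartan_superdatum A d alpha h Iodd"
    and frm: "compatible_form form alpha h d"
    and Q: "Q_param form alpha A Iodd t"
    and dom: "\<forall>i. h i Lam \<ge> 0"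
    and bpos: "\<forall>i\<in>{1..p}. b i \<ge> 1"
    and dist: "inj_on nus {1..p}"
  shows
    "let n = (\<Sum>i=1..p. b i);
         c = (\<lambda>j. \<Sum>l=1..j. b l);
         nut = concat (map (\<lambda>i. replicate (b i) (nus i)) [1..<p + 1]);
         \<beta> = (\<Sum>i=1..p. zsmul (int (b i)) (alpha (nus i)))
     in \<forall>i\<in>{1..p}.
          \<exists>coef :: nat \<Rightarrow> ('i, 'k) fa.
            let N = nat (h (nus i) (Lam - (\<Sum>j=1..c (i - 1). alpha (nth1 nut j))))
            in (\<forall>k\<le>N. coef k \<in> fa_over (Xgens (c (i - 1)))) \<and>
               pol_unit Iodd (take (c (i - 1)) nut) (coef N) \<and>
               (\<Sum>k\<le>N. coef k \<odot> fa_pow (fa_x (c (i - 1) + 1)) k) \<odot> fa_e nut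
                 \<in> cyc_ideal Iodd t (\<lambda>j. h j Lam) n (Ibeta alpha n \<beta>)"
proof -
  define n where "n = (\<Sum>i=1..p. b i)"
  define nut where "nut = block_word b nus p"
  define \<beta> where "\<beta> = (\<Sum>i=1..p. zsmul (int (b i)) (alpha (nus i)))"
  interpret cyclotomic_klr Iodd t "\<lambda>j. h j Lam" n "Ibeta alpha n \<beta>" A
    using datum frm Q dom by (rule cyclotomic_klr_Ibeta)
  have nut_Ibeta: "nut \<in> Ibeta alpha n \<beta>"
    unfolding nut_def n_def \<beta>_def by (rule block_word_Ibeta)
  have "annihilated_in_degree nut (k + 1) (nat (h (nus i) (Lam - (\<Sum>j=1..k. alpha (nth1 nut j)))))"
    if i: "i \<in> {1..p}" and k: "k = (\<Sum>l=1..i - 1. b l)" for i k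
  proof -
    have "1 \<le> b i"
      using bpos i by simp
    note block = block_word_first_of_block[where b = b and nus = nus, OF i this, folded nut_def k]
    have "length nut = n"
      by (simp add: nut_def n_def length_block_word)
    then have "annihilated_in_degree nut (k + 1) (cyclotomic_degree nut (k + 1))"
      using block dist nut_Ibeta by (intro annihilated_cyclotomic_degree) auto
    then show ?thesis
      using block by (simp add: cyclotomic_degree_def cartan_pairing_diff_sum[OF datum])
  qed
  then show ?thesis
    unfolding Let_def block_word_def[symmetric] n_def[symmetric] nut_def[symmetric] \<beta>_def[symmetric]
      fa_mult_eq_times fa_pow_eq_power cyc_ideal_eq
    by (blast intro: annihilated_in_degree_pol_unit)
qed

end
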